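(* Let $Z:\mathrm{dom}Z\subseteq\mathfrak H_{-,+}\to\mathfrak H_{+,-}$ be an arbitrary linear operator and let $V$ be a linear homeomorphism from $\mathfrak H$ onto $\mathfrak H_{-,+}$. The following are equivalent: (i) $M_{\mathrm{Gr}(-\mathrm iZ)}$ is m-dissipative; (ii) $Z$ is maximal accretive and closed; (iii) $V^\#ZV$ is m-accretive in $\mathfrak H$.
   Context: $A$ closed densely defined symmetric in Hilbert space $\mathfrak X$; $S$ bounded uniformly positive selfadjoint in $\mathfrak X\oplus\mathfrak X$; $\mathfrak X^{2,S}$ is $\mathfrak X\oplus\mathfrak X$ with inner product $(S\cdot|\cdot)$; $M^*\{\psi_1,\psi_2\}=S^{-1}\{\mathrm iA^*\psi_2,-\mathrm iA^*\psi_1\}$ on $(\mathrm{dom}A^* )^2$ (adjoint of $M$, same formula with $A$ on $(\mathrm{dom}A)^2$). Mixed-order duality: Hilbert spaces $\mathfrak H,\mathfrak H_{-,+},\mathfrak H_{+,-}$ with $\widetilde{\mathfrak H}_{\mp,\pm}:=\mathfrak H\cap\mathfrak H_{\mp,\pm}$ dense in $\mathfrak H$ and in $\mathfrak H_{\mp,\pm}$, forms $\|h\|^2_{\mathfrak H_{\mp,\pm}}$ on $\widetilde{\mathfrak H}_{\mp,\pm}$ closed in $\mathfrak H$, and $\|h\|_{\mathfrak H_{\pm,\mp}}=\sup_{0\ne g\in\widetilde{\mathfrak H}_{\mp,\pm}}|(g|h)_{\mathfrak H}|/\|g\|_{\mathfrak H_{\mp,\pm}}$ for $h\in\widetilde{\mathfrak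 H}_{\pm,\mp}$; $\langle\cdot|\cdot\rangle_{\mathfrak H}$ the unique bounded sesquilinear extension of $(\cdot|\cdot)_{\mathfrak H}$ to $\mathfrak H_{-,+}\times\mathfrak H_{+,-}$, with $\langle h_{+,-}|h_{-,+}\rangle_{\mathfrak H}:=\overline{\langle h_{-,+}|h_{+,-}\rangle_{\mathfrak H}}$. Fix a reduction tuple $(\mathfrak H_{-,+},\mathfrak H,G,W)$ for $A^*$ ($G:\mathrm{dom}A^*\to\mathfrak H_{-,+}$ linear surjective, $W:\mathfrak H_{-,+}\to\mathfrak H_{+,-}$ linear homeomorphism, $(A^*f|g)_{\mathfrak X}-(f|A^*g)_{\mathfrak X}=\langle Gf|WGg\rangle_{\mathfrak H}$), and set $\Gamma_0\psi=G\psi_2$, $\Gamma_1\psi=\mathrm iWG\psi_1$. $M_{\mathrm{Gr}(-\mathrm iZ)}$ is the restriction of $M^*$ to $\{\psi:\Gamma_0\psi\in\mathrm{dom}Z,\ \mathrm iZ\Gamma_0\psi+\Gamma_1\psi=0\}$. $Z$ is accretive if $\mathrm{Re}\langle Zh|h\rangle_{\mathfrak H}\ge0$ for $h\in\mathrm{dom}Z$, maximal accretive if it has no proper accretive operator extension, closed if its graph is closed in $\mathfrak H_{-,+}\oplus\mathfrak H_{+,-}$. $V^\#:\mathfrak H_{+,-}\to\mathfrak H$ is defined by $\langle Vf|g\rangle_{\mathfrak H}=(f|V^\#g)_{\mathfrak H}$ ($f\in\mathfrak H$, $g\in\mathfrak H_{+,-}$). m-dissipative: upper half-plane in resolvent set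 with $\|(T-\lambda)^{-1}\|\le(\mathrm{Im}\lambda)^{-1}$; m-accretive: $(-\mathrm i)T$ m-dissipative. *)

theory Defs
  imports "HOL-Analysis.Analysis"
begin

class cvec = ab_group_add +
  fixes scaleC :: "complex \<Rightarrow> 'a \<Rightarrow> 'a" (infixr "*\<^sub>C" 75)
  assumes scaleC_add_right: "a *\<^sub>C (x + y) = a *\<^sub>C x + a *\<^sub>C y"
    and scaleC_add_left: "(a + b) *\<^sub>C x = a *\<^sub>C x + b *\<^sub>C x"
    and scaleC_scaleC: "a *\<^sub>C (b *\<^sub>C x) = (a * b) *\<^sub>C x"
    and scaleC_one: "1 *\<^sub>C x = x"

instantiation prod :: (cvec, cvec) cvec
begin
definition scaleC_prod_def: "c *\<^sub>C p = (c *\<^sub>C fst p, c *\<^sub>C snd p)"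
instance
  by standard (auto simp: scaleC_prod_def scaleC_add_right scaleC_add_left scaleC_scaleC scaleC_one)
end

definition csubspace :: "'a::cvec set \<Rightarrow> bool" where
  "csubspace V \<longleftrightarrow> 0 \<in> V \<and> (\<forall>x\<in>V. \<forall>y\<in>V. x + y \<in> V) \<and> (\<forall>c. \<forall>x\<in>V. c *\<^sub>C x \<in> V)"

definition inner_product_on :: "'a::cvec set \<Rightarrow> ('a \<Rightarrow> 'a \<Rightarrow> complex) \<Rightarrow> bool" where
  "inner_product_on V ip \<longleftrightarrow> csubspace V \<and>
     (\<forall>x\<in>V. \<forall>y\<in>V. \<forall>z\<in>V. \<forall>c. ip (x + y) z = ip x z + ip y z \<and> ip (c *\<^sub>C x) y = c * ip x y
         \<and> ip y x = cnj (ip x y)) \<and>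
     (\<forall>x\<in>V. Re (ip x x) \<ge> 0) \<and> (\<forall>x\<in>V. ip x x = 0 \<longrightarrow> x = 0)"

definition cnorm :: "('a \<Rightarrow> 'a \<Rightarrow> complex) \<Rightarrow> 'a \<Rightarrow> real" where
  "cnorm ip x = sqrt (Re (ip x x))"

definition ctends :: "('a::cvec \<Rightarrow> 'a \<Rightarrow> complex) \<Rightarrow> (nat \<Rightarrow> 'a) \<Rightarrow> 'a \<Rightarrow> bool" where
  "ctends ip f x \<longleftrightarrow> (\<lambda>n. cnorm ip (f n - x)) \<longlonglongrightarrow> 0"

definition ccauchy :: "('a::cvec \<Rightarrow> 'a \<Rightarrow> complex) \<Rightarrow> (nat \<Rightarrow> 'a) \<Rightarrow> bool" where
  "ccauchy ip f \<longleftrightarrow> (\<forall>e>0. \<exists>N. \<forall>m\<ge>N. \<forall>n\<ge>N. cnorm ip (f m - f n) < e)"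

definition hilbert_on :: "'a::cvec set \<Rightarrow> ('a \<Rightarrow> 'a \<Rightarrow> complex) \<Rightarrow> bool" where
  "hilbert_on V ip \<longleftrightarrow> inner_product_on V ip \<and>
     (\<forall>f. (\<forall>n. f n \<in> V) \<and> ccauchy ip f \<longrightarrow> (\<exists>x\<in>V. ctends ip f x))"

definition dense_in :: "('a::cvec \<Rightarrow> 'a \<Rightarrow> complex) \<Rightarrow> 'a set \<Rightarrow> 'a set \<Rightarrow> bool" where
  "dense_in ip V D \<longleftrightarrow> D \<subseteq> V \<and> (\<forall>x\<in>V. \<forall>e>0. \<exists>d\<in>D. cnorm ip (x - d) < e)"

definition linear_on :: "'a::cvec set \<Rightarrow> 'b::cvec set \<Rightarrow> ('a \<Rightarrow> 'b) \<Rightarrow> bool" where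
  "linear_on D W T \<longleftrightarrow> csubspace D \<and> (\<forall>x\<in>D. T x \<in> W) \<and>
     (\<forall>x\<in>D. \<forall>y\<in>D. T (x + y) = T x + T y) \<and> (\<forall>c. \<forall>x\<in>D. T (c *\<^sub>C x) = c *\<^sub>C T x)"

definition bounded_on :: "'a set \<Rightarrow> ('a \<Rightarrow> 'a \<Rightarrow> complex) \<Rightarrow> ('b \<Rightarrow> 'b \<Rightarrow> complex) \<Rightarrow> ('a \<Rightarrow> 'b) \<Rightarrow> bool" where
  "bounded_on V ip1 ip2 T \<longleftrightarrow> (\<exists>C. \<forall>x\<in>V. cnorm ip2 (T x) \<le> C * cnorm ip1 x)"

definition lin_homeo :: "'a::cvec set \<Rightarrow> ('a \<Rightarrow> 'a \<Rightarrow> complex) \<Rightarrow> 'b::cvec set \<Rightarrow> ('b \<Rightarrow> 'b \<Rightarrow> complex)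
    \<Rightarrow> ('a \<Rightarrow> 'b) \<Rightarrow> bool" where
  "lin_homeo V ip1 W ip2 T \<longleftrightarrow> linear_on V W T \<and> bij_betw T V W \<and> bounded_on V ip1 ip2 T \<and>
     bounded_on W ip2 ip1 (the_inv_into V T)"

definition closed_op :: "'a::cvec set \<Rightarrow> ('a \<Rightarrow> 'a \<Rightarrow> complex) \<Rightarrow> 'b::cvec set \<Rightarrow> ('b \<Rightarrow> 'b \<Rightarrow> complex)
    \<Rightarrow> 'a set \<Rightarrow> ('a \<Rightarrow> 'b) \<Rightarrow> bool" where
  "closed_op V ip1 W ip2 D T \<longleftrightarrow>
     (\<forall>f x y. (\<forall>n. f n \<in> D) \<and> x \<in> V \<and> y \<in> W \<and> ctends ip1 f x \<and> ctends ip2 (\<lambda>n. T (f n)) y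
        \<longrightarrow> x \<in> D \<and> T x = y)"

definition adj_dom :: "('a \<Rightarrow> 'a \<Rightarrow> complex) \<Rightarrow> 'a set \<Rightarrow> ('a \<Rightarrow> 'a) \<Rightarrow> 'a set" where
  "adj_dom ip D T = {g. \<exists>h. \<forall>f\<in>D. ip (T f) g = ip f h}"

definition adj :: "('a \<Rightarrow> 'a \<Rightarrow> complex) \<Rightarrow> 'a set \<Rightarrow> ('a \<Rightarrow> 'a) \<Rightarrow> 'a \<Rightarrow> 'a" where
  "adj ip D T g = (THE h. \<forall>f\<in>D. ip (T f) g = ip f h)"

definition m_dissipative :: "'a::cvec set \<Rightarrow> ('a \<Rightarrow> 'a \<Rightarrow> complex) \<Rightarrow> 'a set \<Rightarrow> ('a \<Rightarrow> 'a) \<Rightarrow> bool" where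
  "m_dissipative V ip D T \<longleftrightarrow> D \<subseteq> V \<and>
     (\<forall>z. Im z > 0 \<longrightarrow> bij_betw (\<lambda>f. T f - z *\<^sub>C f) D V \<and>
         (\<forall>f\<in>D. Im z * cnorm ip f \<le> cnorm ip (T f - z *\<^sub>C f)))"

definition m_accretive :: "'a::cvec set \<Rightarrow> ('a \<Rightarrow> 'a \<Rightarrow> complex) \<Rightarrow> 'a set \<Rightarrow> ('a \<Rightarrow> 'a) \<Rightarrow> bool" where
  "m_accretive V ip D T \<longleftrightarrow> m_dissipative V ip D (\<lambda>f. (- \<i>) *\<^sub>C T f)"

definition closed_dd_symmetric :: "('x::cvec \<Rightarrow> 'x \<Rightarrow> complex) \<Rightarrow> 'x set \<Rightarrow> ('x \<Rightarrow> 'x) \<Rightarrow> bool" where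
  "closed_dd_symmetric ipX domA A \<longleftrightarrow> linear_on domA UNIV A \<and> dense_in ipX UNIV domA \<and>
     closed_op UNIV ipX UNIV ipX domA A \<and> (\<forall>f\<in>domA. \<forall>g\<in>domA. ipX (A f) g = ipX f (A g))"

definition ip2 :: "('x \<Rightarrow> 'x \<Rightarrow> complex) \<Rightarrow> 'x \<times> 'x \<Rightarrow> 'x \<times> 'x \<Rightarrow> complex" where
  "ip2 ipX p q = ipX (fst p) (fst q) + ipX (snd p) (snd q)"

definition ipS :: "('x \<Rightarrow> 'x \<Rightarrow> complex) \<Rightarrow> ('x \<times> 'x \<Rightarrow> 'x \<times> 'x) \<Rightarrow> 'x \<times> 'x \<Rightarrow> 'x \<times> 'x \<Rightarrow> complex" where
  "ipS ipX S p q = ip2 ipX (S p) q"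

definition bounded_unif_pos_sa :: "('x::cvec \<Rightarrow> 'x \<Rightarrow> complex) \<Rightarrow> ('x \<times> 'x \<Rightarrow> 'x \<times> 'x) \<Rightarrow> bool" where
  "bounded_unif_pos_sa ipX S \<longleftrightarrow> linear_on UNIV UNIV S \<and> bounded_on UNIV (ip2 ipX) (ip2 ipX) S \<and>
     (\<forall>p q. ip2 ipX (S p) q = ip2 ipX p (S q)) \<and>
     (\<exists>c>0. \<forall>p. Re (ip2 ipX (S p) p) \<ge> c * (cnorm (ip2 ipX) p)\<^sup>2)"

definition Mstar :: "('x::cvec \<Rightarrow> 'x \<Rightarrow> complex) \<Rightarrow> 'x set \<Rightarrow> ('x \<Rightarrow> 'x) \<Rightarrow> ('x \<times> 'x \<Rightarrow> 'x \<times> 'x)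
    \<Rightarrow> 'x \<times> 'x \<Rightarrow> 'x \<times> 'x" where
  "Mstar ipX domA A S p = inv S (\<i> *\<^sub>C adj ipX domA A (snd p), (- \<i>) *\<^sub>C adj ipX domA A (fst p))"

definition closed_form_in :: "'h::cvec set \<Rightarrow> ('h \<Rightarrow> 'h \<Rightarrow> complex) \<Rightarrow> 'h set \<Rightarrow> ('h \<Rightarrow> 'h \<Rightarrow> complex) \<Rightarrow> bool" where
  "closed_form_in H ipH K ipK \<longleftrightarrow>
     (\<forall>f h. (\<forall>n. f n \<in> H \<inter> K) \<and> h \<in> H \<and> ctends ipH f h \<and> ccauchy ipK f
        \<longrightarrow> h \<in> H \<inter> K \<and> ctends ipK f h)"

definition dual_norm :: "'h::cvec set \<Rightarrow> ('h \<Rightarrow> 'h \<Rightarrow> complex) \<Rightarrow> 'h set \<Rightarrow> ('h \<Rightarrow> 'h \<Rightarrow> complex)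
    \<Rightarrow> 'h set \<Rightarrow> ('h \<Rightarrow> 'h \<Rightarrow> complex) \<Rightarrow> bool" where
  "dual_norm H ipH K1 ip1 K2 ip2' \<longleftrightarrow>
     (\<forall>h\<in>H \<inter> K1.
        (\<forall>g\<in>(H \<inter> K2) - {0}. cmod (ipH g h) / cnorm ip2' g \<le> cnorm ip1 h) \<and>
        (\<forall>c\<ge>0. (\<forall>g\<in>(H \<inter> K2) - {0}. cmod (ipH g h) / cnorm ip2' g \<le> c) \<longrightarrow> cnorm ip1 h \<le> c))"

definition mixed_duality :: "'h::cvec set \<Rightarrow> ('h \<Rightarrow> 'h \<Rightarrow> complex) \<Rightarrow> 'h set \<Rightarrow> ('h \<Rightarrow> 'h \<Rightarrow> complex)
    \<Rightarrow> 'h set \<Rightarrow> ('h \<Rightarrow> 'h \<Rightarrow> complex) \<Rightarrow> bool" where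
  "mixed_duality H ipH Hmp ipMP Hpm ipPM \<longleftrightarrow>
     hilbert_on H ipH \<and> hilbert_on Hmp ipMP \<and> hilbert_on Hpm ipPM \<and>
     dense_in ipH H (H \<inter> Hmp) \<and> dense_in ipMP Hmp (H \<inter> Hmp) \<and>
     dense_in ipH H (H \<inter> Hpm) \<and> dense_in ipPM Hpm (H \<inter> Hpm) \<and>
     closed_form_in H ipH Hmp ipMP \<and> closed_form_in H ipH Hpm ipPM \<and>
     dual_norm H ipH Hpm ipPM Hmp ipMP \<and> dual_norm H ipH Hmp ipMP Hpm ipPM"

text \<open>pair is the (unique) bounded sesquilinear extension of ipH to Hmp \<times> Hpm.\<close>
definition is_duality_pairing :: "'h::cvec set \<Rightarrow> ('h \<Rightarrow> 'h \<Rightarrow> complex) \<Rightarrow> 'h set \<Rightarrow> ('h \<Rightarrow> 'h \<Rightarrow> complex)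
    \<Rightarrow> 'h set \<Rightarrow> ('h \<Rightarrow> 'h \<Rightarrow> complex) \<Rightarrow> ('h \<Rightarrow> 'h \<Rightarrow> complex) \<Rightarrow> bool" where
  "is_duality_pairing H ipH Hmp ipMP Hpm ipPM pair \<longleftrightarrow>
     (\<forall>x\<in>Hmp. \<forall>y\<in>Hmp. \<forall>g\<in>Hpm. \<forall>c. pair (x + y) g = pair x g + pair y g \<and> pair (c *\<^sub>C x) g = c * pair x g) \<and>
     (\<forall>h\<in>Hmp. \<forall>x\<in>Hpm. \<forall>y\<in>Hpm. \<forall>c. pair h (x + y) = pair h x + pair h y \<and> pair h (c *\<^sub>C x) = cnj c * pair h x) \<and>
     (\<exists>C. \<forall>h\<in>Hmp. \<forall>g\<in>Hpm. cmod (pair h g) \<le> C * cnorm ipMP h * cnorm ipPM g) \<and>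
     (\<forall>h\<in>H \<inter> Hmp. \<forall>g\<in>H \<inter> Hpm. pair h g = ipH h g)"

definition reduction_tuple :: "('x::cvec \<Rightarrow> 'x \<Rightarrow> complex) \<Rightarrow> 'x set \<Rightarrow> ('x \<Rightarrow> 'x) \<Rightarrow>
    'h::cvec set \<Rightarrow> ('h \<Rightarrow> 'h \<Rightarrow> complex) \<Rightarrow> 'h set \<Rightarrow> ('h \<Rightarrow> 'h \<Rightarrow> complex) \<Rightarrow>
    'h set \<Rightarrow> ('h \<Rightarrow> 'h \<Rightarrow> complex) \<Rightarrow> ('h \<Rightarrow> 'h \<Rightarrow> complex) \<Rightarrow> ('x \<Rightarrow> 'h) \<Rightarrow> ('h \<Rightarrow> 'h) \<Rightarrow> bool" where
  "reduction_tuple ipX domA A H ipH Hmp ipMP Hpm ipPM pair G W \<longleftrightarrow>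
     linear_on (adj_dom ipX domA A) Hmp G \<and> G ` adj_dom ipX domA A = Hmp \<and>
     lin_homeo Hmp ipMP Hpm ipPM W \<and>
     (\<forall>f\<in>adj_dom ipX domA A. \<forall>g\<in>adj_dom ipX domA A.
        ipX (adj ipX domA A f) g - ipX f (adj ipX domA A g) = pair (G f) (W (G g)))"

text \<open>Domain of M_{Gr(-iZ)}: Gamma0 psi = G psi2, Gamma1 psi = i W G psi1.\<close>
definition dom_MGr :: "('x::cvec \<Rightarrow> 'x \<Rightarrow> complex) \<Rightarrow> 'x set \<Rightarrow> ('x \<Rightarrow> 'x) \<Rightarrow> ('x \<Rightarrow> 'h::cvec) \<Rightarrow> ('h \<Rightarrow> 'h)
    \<Rightarrow> 'h set \<Rightarrow> ('h \<Rightarrow> 'h) \<Rightarrow> ('x \<times> 'x) set" where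
  "dom_MGr ipX domA A G W domZ Z =
     {p \<in> adj_dom ipX domA A \<times> adj_dom ipX domA A.
        G (snd p) \<in> domZ \<and> \<i> *\<^sub>C Z (G (snd p)) + \<i> *\<^sub>C W (G (fst p)) = 0}"

text \<open>Accretivity: Re <Zh|h> \<ge> 0, where <h_{+,-}|h_{-,+}> := conj <h_{-,+}|h_{+,-}>.\<close>
definition accretive_Z :: "('h \<Rightarrow> 'h \<Rightarrow> complex) \<Rightarrow> 'h set \<Rightarrow> ('h \<Rightarrow> 'h) \<Rightarrow> bool" where
  "accretive_Z pair domZ Z \<longleftrightarrow> (\<forall>h\<in>domZ. Re (cnj (pair h (Z h))) \<ge> 0)"

definition max_accretive_Z :: "'h::cvec set \<Rightarrow> 'h set \<Rightarrow> ('h \<Rightarrow> 'h \<Rightarrow> complex) \<Rightarrow> 'h set \<Rightarrow> ('h \<Rightarrow> 'h) \<Rightarrow> bool" where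
  "max_accretive_Z Hmp Hpm pair domZ Z \<longleftrightarrow> accretive_Z pair domZ Z \<and>
     (\<forall>D' Z'. D' \<subseteq> Hmp \<and> linear_on D' Hpm Z' \<and> domZ \<subseteq> D' \<and> (\<forall>h\<in>domZ. Z' h = Z h) \<and>
        accretive_Z pair D' Z' \<longrightarrow> D' = domZ)"

definition Vsharp :: "'h set \<Rightarrow> ('h \<Rightarrow> 'h \<Rightarrow> complex) \<Rightarrow> ('h \<Rightarrow> 'h \<Rightarrow> complex) \<Rightarrow> ('h \<Rightarrow> 'h) \<Rightarrow> 'h \<Rightarrow> 'h" where
  "Vsharp H ipH pair V g = (THE h. h \<in> H \<and> (\<forall>f\<in>H. pair (V f) g = ipH f h))"

end

theory Submission
  imports Defs
begin

(* The three conditions are each equivalent to maximality of the graph of Z among accretive linear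
   relations (maximal_accretive_graph): every pair (h0, k0) whose span with Gr Z is accretive lies
   on Gr Z.  Green's identity for the reduction tuple gives Im (M psi | psi)_S = Re <G psi2 | W G psi1>,
   and Re (V^# Z V f | f) = Re <V f | Z V f>, so dissipativity of M and accretivity of V^# Z V both
   amount to accretivity of Z; if M is m-dissipative or V^# Z V is m-accretive, one resolvent
   equation moves any such pair (h0, k0) onto Gr Z.
   Conversely, maximality of the graph gives (ii) directly.  Under (ii), V^# Z V is closed, and a
   vector orthogonal to the range of its resolvent yields an accretive extension of Z, hence lies in
   the domain and vanishes; so the (closed) range is everything.  The same argument works for M_Gr,
   using that M^* is the adjoint of M restricted to (dom A)^2 and the maximality of the graph. *)

section \<open>Complex vector spaces and inner products on subspaces\<close>

lemma scaleC_zero_left [simp]: "(0::complex) *\<^sub>C (x::'a::cvec) = 0"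
proof -
  have "(0::complex) *\<^sub>C x = 0 *\<^sub>C x + 0 *\<^sub>C x"
    by (simp flip: scaleC_add_left)
  then show ?thesis by simp
qed

lemma scaleC_zero_right [simp]: "c *\<^sub>C (0::'a::cvec) = 0"
proof -
  have "c *\<^sub>C (0::'a) = c *\<^sub>C 0 + c *\<^sub>C 0"
    by (simp flip: scaleC_add_right)
  then show ?thesis by simp
qed

lemma scaleC_minus_left: "(- c) *\<^sub>C (x::'a::cvec) = - (c *\<^sub>C x)"
proof -
  have "(- c) *\<^sub>C x + c *\<^sub>C x = 0" by (simp flip: scaleC_add_left)
  then show ?thesis by (simp add: eq_neg_iff_add_eq_0)
qed

lemma scaleC_minus_right: "c *\<^sub>C (- x::'a::cvec) = - (c *\<^sub>C x)"
proof -
  have "c *\<^sub>C (- x) + c *\<^sub>C x = 0" by (simp flip: scaleC_add_right)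
  then show ?thesis by (simp add: eq_neg_iff_add_eq_0)
qed

lemma scaleC_diff_right: "c *\<^sub>C (x - y::'a::cvec) = c *\<^sub>C x - c *\<^sub>C y"
  by (simp only: diff_conv_add_uminus scaleC_add_right scaleC_minus_right)

lemma scaleC_diff_left: "(a - b) *\<^sub>C (x::'a::cvec) = a *\<^sub>C x - b *\<^sub>C x"
  by (simp only: diff_conv_add_uminus scaleC_add_left scaleC_minus_left)

lemma scaleC_minus1: "(-1) *\<^sub>C (x::'a::cvec) = - x"
  by (simp add: scaleC_minus_left scaleC_one)

lemma scaleC_two: "(2::complex) *\<^sub>C (x::'a::cvec) = x + x"
  using scaleC_add_left[of 1 1 x] by (simp add: scaleC_one)

lemma scaleC_left_cancel: "c \<noteq> 0 \<Longrightarrow> c *\<^sub>C (x::'a::cvec) = c *\<^sub>C y \<Longrightarrow> x = y"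
  by (metis field_class.field_inverse scaleC_one scaleC_scaleC)

lemma fst_scaleC [simp]: "fst (c *\<^sub>C p) = c *\<^sub>C fst p" by (simp add: scaleC_prod_def)
lemma snd_scaleC [simp]: "snd (c *\<^sub>C p) = c *\<^sub>C snd p" by (simp add: scaleC_prod_def)
lemma scaleC_Pair [simp]: "c *\<^sub>C (a, b) = (c *\<^sub>C a, c *\<^sub>C b)" by (simp add: scaleC_prod_def)

lemma csubspace_0: "csubspace V \<Longrightarrow> 0 \<in> V" by (simp add: csubspace_def)
lemma csubspace_add: "csubspace V \<Longrightarrow> x \<in> V \<Longrightarrow> y \<in> V \<Longrightarrow> x + y \<in> V" by (simp add: csubspace_def)
lemma csubspace_scale: "csubspace V \<Longrightarrow> x \<in> V \<Longrightarrow> c *\<^sub>C x \<in> V" by (simp add: csubspace_def)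
lemma csubspace_minus: "csubspace V \<Longrightarrow> x \<in> V \<Longrightarrow> - x \<in> V"
  using csubspace_scale[of V x "-1"] by (simp add: scaleC_minus1)
lemma csubspace_diff: "csubspace V \<Longrightarrow> x \<in> V \<Longrightarrow> y \<in> V \<Longrightarrow> x - y \<in> V"
  using csubspace_add[of V x "-y"] csubspace_minus[of V y] by simp
lemma csubspace_UNIV: "csubspace UNIV" by (simp add: csubspace_def)
lemma csubspace_Times: "csubspace U \<Longrightarrow> csubspace V \<Longrightarrow> csubspace (U \<times> V)"
  by (auto simp: csubspace_def mem_Times_iff)

lemma linear_onD:
  assumes "linear_on D W T"
  shows "csubspace D" "x \<in> D \<Longrightarrow> T x \<in> W" "x \<in> D \<Longrightarrow> y \<in> D \<Longrightarrow> T (x + y) = T x + T y"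
    "x \<in> D \<Longrightarrow> T (c *\<^sub>C x) = c *\<^sub>C T x"
  using assms by (auto simp: linear_on_def)

lemma linear_on_0: "linear_on D W T \<Longrightarrow> T 0 = 0"
  using linear_onD(4)[of D W T 0 0] linear_onD(1)[of D W T] csubspace_0[of D] by simp
lemma linear_on_minus: "linear_on D W T \<Longrightarrow> x \<in> D \<Longrightarrow> T (- x) = - T x"
  using linear_onD(4)[of D W T x "-1"] by (simp add: scaleC_minus1)
lemma linear_on_diff: "linear_on D W T \<Longrightarrow> x \<in> D \<Longrightarrow> y \<in> D \<Longrightarrow> T (x - y) = T x - T y"
  using linear_onD(3)[of D W T x "-y"] linear_onD(1)[of D W T] linear_on_minus[of D W T y]
    csubspace_minus[of D y] by simp

lemma linear_on_scaleC:
  "linear_on D W T \<Longrightarrow> csubspace W \<Longrightarrow> linear_on D W (\<lambda>x. c *\<^sub>C T x)"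
  by (auto simp: linear_on_def csubspace_scale scaleC_add_right scaleC_scaleC mult.commute)

lemma linear_on_image_csubspace:
  assumes T: "linear_on D W T" shows "csubspace (T ` D)"
proof -
  have D: "csubspace D" by (rule linear_onD(1)[OF T])
  have "T x + T y \<in> T ` D" if "x \<in> D" "y \<in> D" for x y
    using linear_onD(3)[OF T that] csubspace_add[OF D that] by (metis image_eqI)
  moreover have "c *\<^sub>C T x \<in> T ` D" if "x \<in> D" for c x
    using linear_onD(4)[OF T that] csubspace_scale[OF D that] by (metis image_eqI)
  moreover have "0 \<in> T ` D"
    using linear_on_0[OF T] csubspace_0[OF D] by (metis image_eqI)
  ultimately show ?thesis unfolding csubspace_def by blast
qed

lemma closed_opD:
  "closed_op V ip W ip' D T \<Longrightarrow> (\<And>n. f n \<in> D) \<Longrightarrow> x \<in> V \<Longrightarrow> y \<in> W \<Longrightarrow>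
    ctends ip f x \<Longrightarrow> ctends ip' (\<lambda>n. T (f n)) y \<Longrightarrow> x \<in> D \<and> T x = y"
  unfolding closed_op_def by blast

locale inner_space =
  fixes V :: "'a::cvec set" and ip :: "'a \<Rightarrow> 'a \<Rightarrow> complex"
  assumes inner_product_on: "inner_product_on V ip"
begin

lemma subspace: "csubspace V"
  using inner_product_on by (simp add: inner_product_on_def)

lemma mem_zero: "0 \<in> V" using subspace csubspace_0 by blast
lemma mem_add: "x \<in> V \<Longrightarrow> y \<in> V \<Longrightarrow> x + y \<in> V" using subspace csubspace_add by blast
lemma mem_diff: "x \<in> V \<Longrightarrow> y \<in> V \<Longrightarrow> x - y \<in> V" using subspace csubspace_diff by blast
lemma mem_minus: "x \<in> V \<Longrightarrow> - x \<in> V" using subspace csubspace_minus by blast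
lemma mem_scale: "x \<in> V \<Longrightarrow> c *\<^sub>C x \<in> V" using subspace csubspace_scale by blast

lemma ip_laws:
  "\<forall>x\<in>V. \<forall>y\<in>V. \<forall>z\<in>V. \<forall>c. ip (x + y) z = ip x z + ip y z \<and> ip (c *\<^sub>C x) y = c * ip x y
      \<and> ip y x = cnj (ip x y)"
  using inner_product_on unfolding inner_product_on_def by (elim conjE)

lemma add_left: "x \<in> V \<Longrightarrow> y \<in> V \<Longrightarrow> z \<in> V \<Longrightarrow> ip (x + y) z = ip x z + ip y z"
  using ip_laws by blast
lemma scale_left: "x \<in> V \<Longrightarrow> y \<in> V \<Longrightarrow> ip (c *\<^sub>C x) y = c * ip x y"
  using ip_laws by blast
lemma conj_sym: "x \<in> V \<Longrightarrow> y \<in> V \<Longrightarrow> ip y x = cnj (ip x y)"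
  using ip_laws by blast
lemma Re_self_nonneg: "\<forall>x\<in>V. Re (ip x x) \<ge> 0"
  using inner_product_on unfolding inner_product_on_def by (elim conjE)
lemma self_eq_0D: "\<forall>x\<in>V. ip x x = 0 \<longrightarrow> x = 0"
  using inner_product_on unfolding inner_product_on_def by (elim conjE)

lemma add_right: assumes x: "x \<in> V" and y: "y \<in> V" and z: "z \<in> V"
  shows "ip z (x + y) = ip z x + ip z y"
proof -
  have "ip z (x + y) = cnj (ip (x + y) z)" using conj_sym[OF mem_add[OF x y] z] .
  also have "\<dots> = ip z x + ip z y" using add_left[OF x y z] conj_sym[OF x z] conj_sym[OF y z] by simp
  finally show ?thesis .
qed
lemma scale_right: assumes x: "x \<in> V" and y: "y \<in> V" shows "ip x (c *\<^sub>C y) = cnj c * ip x y"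
proof -
  have "ip x (c *\<^sub>C y) = cnj (ip (c *\<^sub>C y) x)" using conj_sym[OF mem_scale[OF y] x] .
  also have "\<dots> = cnj c * ip x y" using scale_left[OF y x] conj_sym[OF x y] by simp
  finally show ?thesis .
qed
lemma zero_left [simp]: "y \<in> V \<Longrightarrow> ip 0 y = 0"
  using scale_left[of 0 y 0] mem_zero by simp
lemma zero_right [simp]: "y \<in> V \<Longrightarrow> ip y 0 = 0"
  using scale_right[of y 0 0] mem_zero by simp
lemma minus_left: "x \<in> V \<Longrightarrow> y \<in> V \<Longrightarrow> ip (- x) y = - ip x y"
  using scale_left[of x y "-1"] by (simp add: scaleC_minus1)
lemma minus_right: "x \<in> V \<Longrightarrow> y \<in> V \<Longrightarrow> ip x (- y) = - ip x y"
  using scale_right[of x y "-1"] by (simp add: scaleC_minus1)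
lemma diff_left: "x \<in> V \<Longrightarrow> y \<in> V \<Longrightarrow> z \<in> V \<Longrightarrow> ip (x - y) z = ip x z - ip y z"
  using add_left[of x "- y" z] minus_left[of y z] mem_minus[of y] by simp
lemma diff_right: "x \<in> V \<Longrightarrow> y \<in> V \<Longrightarrow> z \<in> V \<Longrightarrow> ip z (x - y) = ip z x - ip z y"
  using add_right[of x "- y" z] minus_right[of z y] mem_minus[of y] by simp

lemma self_real: "x \<in> V \<Longrightarrow> ip x x = complex_of_real (Re (ip x x))"
proof -
  assume x: "x \<in> V"
  have "Im (ip x x) = 0" using arg_cong[OF conj_sym[OF x x], of Im] by simp
  then show ?thesis by (simp add: complex_eq_iff)
qed

lemma add_scale_expand:
  assumes x: "x \<in> V" and y: "y \<in> V" and w: "w \<in> V"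
  shows "ip (x + c *\<^sub>C y) (w + d *\<^sub>C y) = ip x w + cnj d * ip x y + c * ip y w + c * cnj d * ip y y"
  using assms by (simp add: add_left add_right scale_left scale_right mem_add mem_scale algebra_simps)

definition nrm :: "'a \<Rightarrow> real" where "nrm x = cnorm ip x"

lemma nrm_nonneg: "x \<in> V \<Longrightarrow> nrm x \<ge> 0"
  using Re_self_nonneg by (simp add: nrm_def cnorm_def)
lemma nrm_sq: "x \<in> V \<Longrightarrow> (nrm x)\<^sup>2 = Re (ip x x)"
  using Re_self_nonneg by (simp add: nrm_def cnorm_def)
lemma self_eq_nrm_sq: "x \<in> V \<Longrightarrow> ip x x = complex_of_real ((nrm x)\<^sup>2)"
  using self_real nrm_sq by simp
lemma nrm_0 [simp]: "nrm 0 = 0"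
  using mem_zero by (simp add: nrm_def cnorm_def)
lemma nrm_eq_0: "x \<in> V \<Longrightarrow> nrm x = 0 \<longleftrightarrow> x = 0"
  using self_eq_nrm_sq self_eq_0D by fastforce
lemma nrm_sq_le_0D: "x \<in> V \<Longrightarrow> (nrm x)\<^sup>2 \<le> 0 \<Longrightarrow> x = 0"
  using nrm_eq_0 by simp

lemma nrm_scale: assumes x: "x \<in> V" shows "nrm (c *\<^sub>C x) = cmod c * nrm x"
proof -
  have "(nrm (c *\<^sub>C x))\<^sup>2 = Re (c * (cnj c * ip x x))"
    using nrm_sq[OF mem_scale[OF x]] scale_left[OF x mem_scale[OF x]] scale_right[OF x x] by simp
  also have "\<dots> = (cmod c * nrm x)\<^sup>2"
    using self_eq_nrm_sq[OF x]
    by (simp add: complex_mult_cnj mult.assoc[symmetric] cmod_power2 power_mult_distrib del: of_real_power)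
  finally show ?thesis
    using nrm_nonneg[OF x] nrm_nonneg[OF mem_scale[OF x]] by (simp add: power2_eq_iff_nonneg)
qed

lemma nrm_minus: "x \<in> V \<Longrightarrow> nrm (- x) = nrm x"
  using nrm_scale[of x "-1"] by (simp add: scaleC_minus1)
lemma nrm_commute: "x \<in> V \<Longrightarrow> y \<in> V \<Longrightarrow> nrm (x - y) = nrm (y - x)"
  using nrm_minus[of "y - x"] mem_diff[of y x] by simp

lemma nrm_add_sq: assumes x: "x \<in> V" and y: "y \<in> V"
  shows "(nrm (x + y))\<^sup>2 = (nrm x)\<^sup>2 + (nrm y)\<^sup>2 + 2 * Re (ip x y)"
  using add_scale_expand[OF x y x, of 1 1] conj_sym[OF x y]
  by (simp add: nrm_sq x y mem_add scaleC_one)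

lemma nrm_diff_sq: assumes x: "x \<in> V" and y: "y \<in> V"
  shows "(nrm (x - y))\<^sup>2 = (nrm x)\<^sup>2 + (nrm y)\<^sup>2 - 2 * Re (ip x y)"
  using nrm_add_sq[OF x mem_minus[OF y]] nrm_minus[OF y] minus_right[OF x y] by simp

lemma nrm_sq_diff_projection:
  assumes x: "x \<in> V" and y: "y \<in> V" and y0: "y \<noteq> 0"
  shows "(nrm (x - (ip x y / ip y y) *\<^sub>C y))\<^sup>2 = (nrm x)\<^sup>2 - (cmod (ip x y))\<^sup>2 / (nrm y)\<^sup>2"
proof -
  define t where "t = ip x y / ip y y"
  have ny: "(nrm y)\<^sup>2 > 0" using nrm_eq_0[OF y] nrm_nonneg[OF y] y0 by simp
  have yy: "ip y y = complex_of_real ((nrm y)\<^sup>2)" by (rule self_eq_nrm_sq[OF y])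
  have "ip (x - t *\<^sub>C y) (x - t *\<^sub>C y) = ip (x + (- t) *\<^sub>C y) (x + (- t) *\<^sub>C y)"
    by (simp add: scaleC_minus_left)
  also have "\<dots> = ip x x - cnj t * ip x y - t * ip y x + t * cnj t * ip y y"
    using add_scale_expand[OF x y x, of "- t" "- t"] by simp
  also have "\<dots> = ip x x - complex_of_real ((cmod (ip x y))\<^sup>2 / (nrm y)\<^sup>2)"
    using ny complex_norm_square[of "ip x y", unfolded power2_eq_square] unfolding t_def yy conj_sym[OF x y]
    by (simp add: field_simps power2_eq_square del: of_real_power)
  finally show ?thesis
    unfolding t_def using nrm_sq[OF x] nrm_sq[OF mem_diff[OF x mem_scale[OF y]]] by simp
qed

lemma cauchy_schwarz: assumes x: "x \<in> V" and y: "y \<in> V" shows "cmod (ip x y) \<le> nrm x * nrm y"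
proof (cases "y = 0")
  case True then show ?thesis using x by simp
next
  case False
  have ny: "(nrm y)\<^sup>2 > 0" using nrm_eq_0[OF y] nrm_nonneg[OF y] False by simp
  have "0 \<le> (nrm x)\<^sup>2 - (cmod (ip x y))\<^sup>2 / (nrm y)\<^sup>2"
    using nrm_sq_diff_projection[OF x y False] by (metis zero_le_power2)
  then have "(cmod (ip x y))\<^sup>2 \<le> (nrm x * nrm y)\<^sup>2"
    using ny by (simp add: field_simps power_mult_distrib)
  then show ?thesis using nrm_nonneg[OF x] nrm_nonneg[OF y]
    by (meson mult_nonneg_nonneg power2_le_imp_le)
qed

lemma Re_le_nrm_mult: "x \<in> V \<Longrightarrow> y \<in> V \<Longrightarrow> Re (ip x y) \<le> nrm x * nrm y"
  using cauchy_schwarz complex_Re_le_cmod order_trans by blast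

lemma nrm_triangle: assumes x: "x \<in> V" and y: "y \<in> V" shows "nrm (x + y) \<le> nrm x + nrm y"
proof -
  have "(nrm (x + y))\<^sup>2 \<le> (nrm x + nrm y)\<^sup>2"
    using nrm_add_sq[OF x y] Re_le_nrm_mult[OF x y] by (simp add: power2_sum)
  then show ?thesis using nrm_nonneg[OF x] nrm_nonneg[OF y] by (meson add_nonneg_nonneg power2_le_imp_le)
qed

lemma nrm_triangle_diff: "x \<in> V \<Longrightarrow> y \<in> V \<Longrightarrow> z \<in> V \<Longrightarrow> nrm (x - z) \<le> nrm (x - y) + nrm (y - z)"
  using nrm_triangle[OF mem_diff mem_diff, of x y y z] by simp

lemma nrm_reverse_triangle: "x \<in> V \<Longrightarrow> y \<in> V \<Longrightarrow> nrm x - nrm y \<le> nrm (x - y)"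
  using nrm_triangle[OF mem_diff, of x y y] by simp

lemma eq_if_ip_right_eq:
  assumes "y1 \<in> V" "y2 \<in> V" "\<And>f. f \<in> V \<Longrightarrow> ip f y1 = ip f y2" shows "y1 = y2"
proof -
  have "ip (y1 - y2) (y1 - y2) = 0"
    using diff_right[OF assms(1,2)] assms(3) mem_diff[OF assms(1,2)] by simp
  then have "y1 - y2 = 0" using self_eq_0D mem_diff[OF assms(1,2)] by blast
  then show ?thesis by simp
qed

end

lemma tendsto_complex_dominated:
  fixes a :: "nat \<Rightarrow> complex" and b :: "nat \<Rightarrow> real"
  assumes "\<And>n. cmod (a n - l) \<le> b n" "b \<longlonglongrightarrow> 0" shows "a \<longlonglongrightarrow> l"
proof -
  have "(\<lambda>n. a n - l) \<longlonglongrightarrow> 0"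
    by (rule Lim_null_comparison[OF _ assms(2)]) (use assms in auto)
  then show ?thesis by (simp add: LIM_zero_iff)
qed

context inner_space
begin

lemma ctends_iff: "ctends ip f x \<longleftrightarrow> (\<lambda>n. nrm (f n - x)) \<longlonglongrightarrow> 0"
  by (simp add: ctends_def nrm_def)
lemma ccauchy_iff: "ccauchy ip f \<longleftrightarrow> (\<forall>e>0. \<exists>N. \<forall>m\<ge>N. \<forall>n\<ge>N. nrm (f m - f n) < e)"
  by (simp add: ccauchy_def nrm_def)

lemma ctends_bound:
  assumes "\<And>n. f n \<in> V" "x \<in> V" "\<And>n. nrm (f n - x) \<le> b n" "b \<longlonglongrightarrow> 0"
  shows "ctends ip f x"
  unfolding ctends_iff
  by (rule Lim_null_comparison[OF _ assms(4)]) (use assms nrm_nonneg mem_diff in auto)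

lemma ctends_unique:
  assumes "\<And>n. f n \<in> V" "x \<in> V" "y \<in> V" "ctends ip f x" "ctends ip f y"
  shows "x = y"
proof -
  have l: "(\<lambda>n. nrm (f n - x) + nrm (f n - y)) \<longlonglongrightarrow> 0"
    using assms(4,5) tendsto_add unfolding ctends_iff by fastforce
  have "nrm (x - y) \<le> nrm (f n - x) + nrm (f n - y)" for n
    using nrm_triangle_diff[OF assms(2) assms(1)[of n] assms(3)] nrm_commute[OF assms(2) assms(1)[of n]]
    by simp
  then have "nrm (x - y) \<le> 0" using LIMSEQ_le_const[OF l] by blast
  then show ?thesis using nrm_eq_0[OF mem_diff[OF assms(2,3)]] nrm_nonneg[OF mem_diff[OF assms(2,3)]] by simp
qed

lemma ctends_const: "x \<in> V \<Longrightarrow> ctends ip (\<lambda>n. x) x"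
  unfolding ctends_iff by simp

lemma ctends_add:
  assumes "\<And>n. f n \<in> V" "\<And>n. g n \<in> V" "x \<in> V" "y \<in> V" "ctends ip f x" "ctends ip g y"
  shows "ctends ip (\<lambda>n. f n + g n) (x + y)"
proof (rule ctends_bound)
  show "(\<lambda>n. nrm (f n - x) + nrm (g n - y)) \<longlonglongrightarrow> 0"
    using assms(5,6) tendsto_add unfolding ctends_iff by fastforce
  show "nrm (f n + g n - (x + y)) \<le> nrm (f n - x) + nrm (g n - y)" for n
    using nrm_triangle[OF mem_diff[OF assms(1)[of n] assms(3)] mem_diff[OF assms(2)[of n] assms(4)]]
    by (simp add: algebra_simps)
qed (use assms mem_add in auto)

lemma ctends_scale:
  assumes "\<And>n. f n \<in> V" "x \<in> V" "ctends ip f x"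
  shows "ctends ip (\<lambda>n. c *\<^sub>C f n) (c *\<^sub>C x)"
proof (rule ctends_bound)
  show "(\<lambda>n. cmod c * nrm (f n - x)) \<longlonglongrightarrow> 0"
    using assms(3) tendsto_mult_right_zero unfolding ctends_iff by blast
  show "nrm (c *\<^sub>C f n - c *\<^sub>C x) \<le> cmod c * nrm (f n - x)" for n
    using nrm_scale[OF mem_diff[OF assms(1) assms(2)], of c] by (simp add: scaleC_diff_right)
qed (use assms mem_scale in auto)

lemma ctends_nrm:
  assumes "\<And>n. f n \<in> V" "x \<in> V" "ctends ip f x"
  shows "(\<lambda>n. nrm (f n)) \<longlonglongrightarrow> nrm x"
proof -
  have bound: "\<bar>nrm (f n) - nrm x\<bar> \<le> nrm (f n - x)" for n
    using nrm_reverse_triangle[OF assms(1) assms(2)] nrm_reverse_triangle[OF assms(2) assms(1)]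
      nrm_commute[OF assms(2) assms(1)] by (auto simp: abs_le_iff)
  have "(\<lambda>n. nrm (f n) - nrm x) \<longlonglongrightarrow> 0"
  proof (rule Lim_null_comparison)
    show "\<forall>\<^sub>F n in sequentially. norm (nrm (f n) - nrm x) \<le> nrm (f n - x)"
      using bound by (intro always_eventually allI) simp
    show "(\<lambda>n. nrm (f n - x)) \<longlonglongrightarrow> 0" using assms(3) by (simp add: ctends_iff)
  qed
  then show ?thesis by (simp add: LIM_zero_iff)
qed

lemma ctends_ip:
  assumes f: "\<And>n. f n \<in> V" and g: "\<And>n. g n \<in> V" and x: "x \<in> V" and y: "y \<in> V"
    and fx: "ctends ip f x" and gy: "ctends ip g y"
  shows "(\<lambda>n. ip (f n) (g n)) \<longlonglongrightarrow> ip x y"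
proof (rule tendsto_complex_dominated)
  have "(\<lambda>n. nrm (f n - x) * nrm (g n)) \<longlonglongrightarrow> 0 * nrm y"
    by (rule tendsto_mult) (use fx ctends_iff ctends_nrm[OF g y gy] in auto)
  moreover have "(\<lambda>n. nrm x * nrm (g n - y)) \<longlonglongrightarrow> nrm x * 0"
    by (rule tendsto_mult) (use gy ctends_iff in auto)
  ultimately show "(\<lambda>n. nrm (f n - x) * nrm (g n) + nrm x * nrm (g n - y)) \<longlonglongrightarrow> 0"
    using tendsto_add by fastforce
  fix n
  have "ip (f n) (g n) - ip x y = ip (f n - x) (g n) + ip x (g n - y)"
    using diff_left[OF f[of n] x g[of n]] diff_right[OF g[of n] y x] by simp
  then have "cmod (ip (f n) (g n) - ip x y) \<le> cmod (ip (f n - x) (g n)) + cmod (ip x (g n - y))"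
    by (metis norm_triangle_ineq)
  also have "\<dots> \<le> nrm (f n - x) * nrm (g n) + nrm x * nrm (g n - y)"
    by (rule add_mono[OF cauchy_schwarz[OF mem_diff[OF f x] g] cauchy_schwarz[OF x mem_diff[OF g y]]])
  finally show "cmod (ip (f n) (g n) - ip x y) \<le> nrm (f n - x) * nrm (g n) + nrm x * nrm (g n - y)" .
qed

lemma ctends_cauchy:
  assumes "\<And>n. f n \<in> V" "x \<in> V" "ctends ip f x" shows "ccauchy ip f"
  unfolding ccauchy_iff
proof (intro allI impI)
  fix e :: real assume e: "e > 0"
  have "(\<lambda>n. nrm (f n - x)) \<longlonglongrightarrow> 0" using assms(3) by (simp add: ctends_iff)
  from LIMSEQ_D[OF this, of "e / 2"] e obtain N where N: "\<forall>n\<ge>N. norm (nrm (f n - x) - 0) < e / 2"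
    by auto
  have "nrm (f m - f n) < e" if "m \<ge> N" "n \<ge> N" for m n
  proof -
    have "nrm (f m - x) < e / 2" "nrm (f n - x) < e / 2" using N that by auto
    then show ?thesis
      using nrm_triangle_diff[OF assms(1) assms(2) assms(1), of m n] nrm_commute[OF assms(2) assms(1)[of n]]
      by linarith
  qed
  then show "\<exists>N. \<forall>m\<ge>N. \<forall>n\<ge>N. nrm (f m - f n) < e" by blast
qed

lemma ccauchy_of_lower_bound:
  assumes L: "\<And>f g. f \<in> D \<Longrightarrow> g \<in> D \<Longrightarrow> c * nrm (f - g) \<le> nrm' (L f - L g)"
    and c: "c > 0" and fD: "\<And>n. f n \<in> D"
    and cauchy: "\<forall>e>0. \<exists>N. \<forall>m\<ge>N. \<forall>n\<ge>N. nrm' (L (f m) - L (f n)) < e"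
  shows "ccauchy ip f"
  unfolding ccauchy_iff
proof (intro allI impI)
  fix e :: real assume "e > 0"
  then obtain N where N: "\<forall>m\<ge>N. \<forall>n\<ge>N. nrm' (L (f m) - L (f n)) < c * e"
    using cauchy c by (meson mult_pos_pos)
  have "nrm (f m - f n) < e" if "m \<ge> N" "n \<ge> N" for m n
    using L[OF fD fD, of m n] N that c by (smt (verit) mult_less_cancel_left_pos)
  then show "\<exists>N. \<forall>m\<ge>N. \<forall>n\<ge>N. nrm (f m - f n) < e" by blast
qed

end

context inner_space
begin

lemma parallelogram:
  "x \<in> V \<Longrightarrow> y \<in> V \<Longrightarrow> (nrm (x + y))\<^sup>2 + (nrm (x - y))\<^sup>2 = 2 * (nrm x)\<^sup>2 + 2 * (nrm y)\<^sup>2"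
  using nrm_add_sq nrm_diff_sq by simp

lemma ip_eq_0_if_nrm_minimal:
  assumes u: "u \<in> V" and s: "s \<in> V" and min: "\<And>t. nrm u \<le> nrm (u - t *\<^sub>C s)"
  shows "ip u s = 0"
proof (cases "s = 0")
  case False
  have ns: "(nrm s)\<^sup>2 > 0" using nrm_eq_0[OF s] nrm_nonneg[OF s] False by simp
  have "(nrm u)\<^sup>2 \<le> (nrm (u - (ip u s / ip s s) *\<^sub>C s))\<^sup>2"
    using min nrm_nonneg[OF u] by (simp add: power_mono)
  then have "(cmod (ip u s))\<^sup>2 / (nrm s)\<^sup>2 \<le> 0"
    unfolding nrm_sq_diff_projection[OF u s False] by simp
  then show ?thesis using ns by (simp add: divide_le_0_iff)
qed (use u in simp)

definition seq_closed :: "'a set \<Rightarrow> bool" where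
  "seq_closed R \<longleftrightarrow> (\<forall>f x. (\<forall>n. f n \<in> R) \<longrightarrow> x \<in> V \<longrightarrow> ctends ip f x \<longrightarrow> x \<in> R)"

lemma seq_closedD: "seq_closed R \<Longrightarrow> (\<And>n. f n \<in> R) \<Longrightarrow> x \<in> V \<Longrightarrow> ctends ip f x \<Longrightarrow> x \<in> R"
  unfolding seq_closed_def by blast

lemma minimizing_sequence_ccauchy:
  assumes R: "R \<subseteq> V" "csubspace R" and x: "x \<in> V" and r: "\<And>n. r n \<in> R"
    and lower: "\<And>s. s \<in> R \<Longrightarrow> d \<le> nrm (x - s)" and lim: "(\<lambda>n. nrm (x - r n)) \<longlonglongrightarrow> d"
  shows "ccauchy ip r"
  unfolding ccauchy_iff
proof (intro allI impI)
  fix e :: real assume e: "e > 0"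
  have rV: "\<And>n. r n \<in> V" using r R(1) by blast
  have d0: "0 \<le> d" by (rule LIMSEQ_le_const[OF lim]) (use nrm_nonneg mem_diff x rV in auto)
  have para: "(nrm (r m - r n))\<^sup>2 \<le> 2 * (nrm (x - r m))\<^sup>2 + 2 * (nrm (x - r n))\<^sup>2 - 4 * d\<^sup>2" for m n
  proof -
    define mid where "mid = (1/2) *\<^sub>C (r m + r n)"
    have mid: "mid \<in> R" unfolding mid_def using r R(2) csubspace_add csubspace_scale by blast
    have "2 *\<^sub>C (x - mid) = 2 *\<^sub>C x - (r m + r n)"
      by (simp add: mid_def scaleC_diff_right scaleC_scaleC scaleC_one)
    also have "\<dots> = (x - r m) + (x - r n)" by (simp add: scaleC_two algebra_simps)
    finally have "(nrm ((x - r m) + (x - r n)))\<^sup>2 = 4 * (nrm (x - mid))\<^sup>2"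
      using nrm_scale[OF mem_diff[OF x R(1)[THEN subsetD, OF mid]], of 2] by (simp add: power_mult_distrib)
    moreover have "d\<^sup>2 \<le> (nrm (x - mid))\<^sup>2" using lower[OF mid] d0 by (simp add: power_mono)
    moreover have "(nrm ((x - r m) - (x - r n)))\<^sup>2 = (nrm (r m - r n))\<^sup>2"
      using nrm_commute[OF rV rV, of n m] by simp
    ultimately show ?thesis
      using parallelogram[OF mem_diff[OF x rV] mem_diff[OF x rV], of m n] by linarith
  qed
  have "(\<lambda>n. 2 * (nrm (x - r n))\<^sup>2 - 2 * d\<^sup>2) \<longlonglongrightarrow> 2 * d\<^sup>2 - 2 * d\<^sup>2"
    by (intro tendsto_intros lim)
  from LIMSEQ_D[OF this[simplified], of "e\<^sup>2 / 2"] e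
  obtain N where N: "\<forall>n\<ge>N. \<bar>2 * (nrm (x - r n))\<^sup>2 - 2 * d\<^sup>2\<bar> < e\<^sup>2 / 2" by auto
  have "nrm (r m - r n) < e" if "m \<ge> N" "n \<ge> N" for m n
  proof -
    have "2 * (nrm (x - r m))\<^sup>2 - 2 * d\<^sup>2 < e\<^sup>2 / 2" "2 * (nrm (x - r n))\<^sup>2 - 2 * d\<^sup>2 < e\<^sup>2 / 2"
      using N that abs_less_iff by blast+
    then have "(nrm (r m - r n))\<^sup>2 < e\<^sup>2" using para[of m n] by linarith
    then show ?thesis using e nrm_nonneg[OF mem_diff[OF rV rV]] by (simp add: power_less_imp_less_base)
  qed
  then show "\<exists>N. \<forall>m\<ge>N. \<forall>n\<ge>N. nrm (r m - r n) < e" by blast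
qed

end

locale hilbert_space = inner_space +
  assumes complete: "\<And>f. (\<forall>n. f n \<in> V) \<Longrightarrow> ccauchy ip f \<Longrightarrow> \<exists>x\<in>V. ctends ip f x"

lemma hilbert_space_of_hilbert_on: "hilbert_on V ip \<Longrightarrow> hilbert_space V ip"
  unfolding hilbert_on_def hilbert_space_def hilbert_space_axioms_def inner_space_def by blast

context hilbert_space
begin

lemma nearest_point_exists:
  assumes R: "R \<subseteq> V" "csubspace R" "seq_closed R" and x: "x \<in> V"
  shows "\<exists>r0\<in>R. \<forall>s\<in>R. nrm (x - r0) \<le> nrm (x - s)"
proof -
  define d where "d = (INF s\<in>R. nrm (x - s))"
  have bdd: "bdd_below ((\<lambda>s. nrm (x - s)) ` R)"
    using nrm_nonneg mem_diff x R(1) by (intro bdd_belowI2) blast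
  have R0: "R \<noteq> {}" using csubspace_0[OF R(2)] by blast
  have lower: "d \<le> nrm (x - s)" if "s \<in> R" for s
    unfolding d_def using bdd that by (rule cINF_lower)
  have "\<exists>s\<in>R. nrm (x - s) < d + 1 / (real n + 1)" for n
  proof -
    have "d < d + 1 / (real n + 1)" by simp
    then show ?thesis using cINF_less_iff[OF R0 bdd] unfolding d_def by blast
  qed
  then obtain r where r: "\<And>n. r n \<in> R" "\<And>n. nrm (x - r n) < d + 1 / (real n + 1)" by metis
  have rV: "\<And>n. r n \<in> V" using r(1) R(1) by blast
  have lim: "(\<lambda>n. nrm (x - r n)) \<longlonglongrightarrow> d"
  proof (rule real_tendsto_sandwich[of "\<lambda>_. d" _ _ "\<lambda>n. d + 1 / (real n + 1)"])
    show "(\<lambda>n. d + 1 / (real n + 1)) \<longlonglongrightarrow> d"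
      using LIMSEQ_inverse_real_of_nat_add[of d] by (simp add: inverse_eq_divide add.commute)
  qed (use lower r in \<open>auto intro!: always_eventually less_imp_le\<close>)
  obtain r0 where r0: "r0 \<in> V" "ctends ip r r0"
    using complete[OF _ minimizing_sequence_ccauchy[OF R(1,2) x r(1) lower lim]] rV by blast
  have "(\<lambda>n. nrm (x - r n) + nrm (r n - r0)) \<longlonglongrightarrow> d + 0"
    using r0(2) by (intro tendsto_add lim) (simp add: ctends_iff)
  moreover have "nrm (x - r0) \<le> nrm (x - r n) + nrm (r n - r0)" for n
    by (rule nrm_triangle_diff[OF x rV r0(1)])
  ultimately have "nrm (x - r0) \<le> d" using LIMSEQ_le_const by fastforce
  then show ?thesis using lower seq_closedD[OF R(3) r(1) r0] order_trans by blast
qed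

end

context hilbert_space
begin

lemma closed_subspace_eq_if_orthogonal_trivial:
  assumes R: "R \<subseteq> V" "csubspace R" "seq_closed R"
    and orth: "\<And>u. u \<in> V \<Longrightarrow> (\<forall>s\<in>R. ip s u = 0) \<Longrightarrow> u = 0"
  shows "R = V"
proof
  show "V \<subseteq> R"
  proof
    fix x assume x: "x \<in> V"
    obtain r0 where r0: "r0 \<in> R" "\<And>s. s \<in> R \<Longrightarrow> nrm (x - r0) \<le> nrm (x - s)"
      using nearest_point_exists[OF R x] by blast
    have r0V: "r0 \<in> V" using r0(1) R(1) by blast
    have "ip s (x - r0) = 0" if s: "s \<in> R" for s
    proof -
      have sV: "s \<in> V" using s R(1) by blast
      have "nrm (x - r0) \<le> nrm (x - r0 - t *\<^sub>C s)" for t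
        using r0(2)[OF csubspace_add[OF R(2) r0(1) csubspace_scale[OF R(2) s]]] by (simp add: algebra_simps)
      then have "ip (x - r0) s = 0" by (rule ip_eq_0_if_nrm_minimal[OF mem_diff[OF x r0V] sV])
      then show ?thesis using conj_sym[OF mem_diff[OF x r0V] sV] by simp
    qed
    then have "x - r0 = 0" using orth[OF mem_diff[OF x r0V]] by blast
    then show "x \<in> R" using r0(1) by simp
  qed
qed (use assms in blast)

end

context inner_space
begin

lemma riesz_of_orthogonal_to_kernel:
  assumes add: "\<And>x y. x \<in> V \<Longrightarrow> y \<in> V \<Longrightarrow> \<phi> (x + y) = \<phi> x + \<phi> y"
    and scale: "\<And>x c. x \<in> V \<Longrightarrow> \<phi> (c *\<^sub>C x) = c * \<phi> x"
    and u: "u \<in> V" "\<phi> u \<noteq> 0" and orth: "\<And>w. w \<in> V \<Longrightarrow> \<phi> w = 0 \<Longrightarrow> ip w u = 0"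
    and x: "x \<in> V"
  shows "\<phi> x = ip x ((cnj (\<phi> u) / ip u u) *\<^sub>C u)"
proof -
  have uu: "ip u u \<noteq> 0" using u self_eq_0D by (metis scale[OF u(1), of 0] mult_zero_left scaleC_zero_left)
  have "cnj (ip u u) = ip u u" using self_real[OF u(1)] by (metis complex_cnj_complex_of_real)
  then have rhs: "ip x ((cnj (\<phi> u) / ip u u) *\<^sub>C u) = \<phi> u / ip u u * ip x u"
    using scale_right[OF x u(1)] by simp
  define w where "w = x - (\<phi> x / \<phi> u) *\<^sub>C u"
  have wV: "w \<in> V" unfolding w_def using mem_diff mem_scale x u(1) by simp
  have "\<phi> w = 0"
    using add[OF x mem_scale[OF u(1)], of "- (\<phi> x / \<phi> u)"] scale[OF u(1)] u(2)
    by (simp add: w_def scaleC_minus_left[symmetric] diff_conv_add_uminus)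
  then have "ip x u = (\<phi> x / \<phi> u) * ip u u"
    using orth[OF wV] diff_left[OF x mem_scale[OF u(1)] u(1)] scale_left[OF u(1) u(1)] by (simp add: w_def)
  then show ?thesis using rhs u(2) uu by (simp add: field_simps)
qed

end

context hilbert_space
begin

lemma riesz_representation:
  assumes add: "\<And>x y. x \<in> V \<Longrightarrow> y \<in> V \<Longrightarrow> \<phi> (x + y) = \<phi> x + \<phi> y"
    and scale: "\<And>x c. x \<in> V \<Longrightarrow> \<phi> (c *\<^sub>C x) = c * \<phi> x"
    and bound: "\<And>x. x \<in> V \<Longrightarrow> cmod (\<phi> x) \<le> C * nrm x"
  shows "\<exists>y\<in>V. \<forall>x\<in>V. \<phi> x = ip x y"
proof (cases "\<forall>x\<in>V. \<phi> x = 0")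
  case True
  then show ?thesis using mem_zero by (intro bexI[of _ 0]) auto
next
  case False
  define K where "K = {x\<in>V. \<phi> x = 0}"
  have K: "csubspace K"
    using mem_zero mem_add mem_scale add scale scale[OF mem_zero, of 0]
    unfolding csubspace_def K_def by auto
  have "seq_closed K" unfolding seq_closed_def
  proof (intro allI impI)
    fix f x assume f: "\<forall>n. f n \<in> K" and x: "x \<in> V" and fx: "ctends ip f x"
    have fV: "\<And>n. f n \<in> V" using f K_def by auto
    have "cmod (\<phi> x) \<le> C * nrm (f n - x)" for n
    proof -
      have "\<phi> (f n - x) + \<phi> x = 0" using add[OF mem_diff[OF fV x] x] f K_def by simp
      then have "\<phi> x = - \<phi> (f n - x)" by (metis add.commute eq_neg_iff_add_eq_0)
      then show ?thesis using bound[OF mem_diff[OF fV x]] by simp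
    qed
    moreover have "(\<lambda>n. C * nrm (f n - x)) \<longlonglongrightarrow> C * 0"
      using fx by (intro tendsto_mult tendsto_const) (simp add: ctends_iff)
    ultimately have "cmod (\<phi> x) \<le> 0" using LIMSEQ_le_const by fastforce
    then show "x \<in> K" using x K_def by simp
  qed
  moreover have "K \<noteq> V" using False K_def by blast
  ultimately obtain u where u: "u \<in> V" "\<forall>w\<in>K. ip w u = 0" "u \<noteq> 0"
    using closed_subspace_eq_if_orthogonal_trivial[OF _ K] K_def by blast
  have "\<phi> u \<noteq> 0"
    using u self_eq_0D K_def by blast
  then show ?thesis
    using riesz_of_orthogonal_to_kernel[OF add scale u(1)] u(2) mem_scale[OF u(1)] K_def
    by (metis (mono_tags, lifting) mem_Collect_eq)
qed

end

section \<open>Dissipative operators\<close>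

context inner_space
begin

lemma m_dissipative_Im_le_0:
  assumes m: "m_dissipative V ip D L" and f: "f \<in> D" and Lf: "L f \<in> V"
  shows "Im (ip (L f) f) \<le> 0"
proof (rule ccontr)
  assume "\<not> Im (ip (L f) f) \<le> 0"
  then have w: "Im (ip (L f) f) > 0" by simp
  have fV: "f \<in> V" using m f unfolding m_dissipative_def by blast
  text \<open>For large \<open>t\<close> the estimate at \<open>z = \<i> t\<close> contradicts \<open>Im (ip (L f) f) > 0\<close>.\<close>
  define t where "t = (nrm (L f))\<^sup>2 / Im (ip (L f) f) + 1"
  have t: "t > 0" unfolding t_def using w by (simp add: add_nonneg_pos)
  have est: "\<forall>f\<in>D. Im z * cnorm ip f \<le> cnorm ip (L f - z *\<^sub>C f)" if "Im z > 0" for z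
    using m that unfolding m_dissipative_def by blast
  have "t * nrm f \<le> nrm (L f - (\<i> * complex_of_real t) *\<^sub>C f)"
    using est[of "\<i> * complex_of_real t"] f t unfolding nrm_def by simp
  then have "(t * nrm f)\<^sup>2 \<le> (nrm (L f - (\<i> * complex_of_real t) *\<^sub>C f))\<^sup>2"
    using t nrm_nonneg[OF fV] by (intro power_mono) auto
  also have "\<dots> = (nrm (L f))\<^sup>2 + (t * nrm f)\<^sup>2 - 2 * t * Im (ip (L f) f)"
    using nrm_diff_sq[OF Lf mem_scale[OF fV]] nrm_scale[OF fV] scale_right[OF Lf fV] t
    by (simp add: norm_mult)
  finally have "2 * t * Im (ip (L f) f) \<le> (nrm (L f))\<^sup>2" by simp
  moreover have "t * Im (ip (L f) f) = (nrm (L f))\<^sup>2 + Im (ip (L f) f)"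
    unfolding t_def using w by (simp add: field_simps)
  ultimately show False using w zero_le_power2[of "nrm (L f)"] by linarith
qed

lemma dissipative_lower_bound:
  assumes fV: "f \<in> V" and Lf: "Lf \<in> V" and d: "Im (ip Lf f) \<le> 0" and z: "Im z > 0"
  shows "Im z * nrm f \<le> nrm (Lf - z *\<^sub>C f)"
proof (cases "f = 0")
  case True then show ?thesis using nrm_nonneg[OF mem_diff[OF Lf mem_scale[OF fV]]] by simp
next
  case False
  then have pos: "nrm f > 0" using nrm_nonneg[OF fV] nrm_eq_0[OF fV] by (simp add: less_le)
  have e: "ip (Lf - z *\<^sub>C f) f = ip Lf f - z * complex_of_real ((nrm f)\<^sup>2)"
    using diff_left[OF Lf mem_scale[OF fV] fV] scale_left[OF fV fV] self_eq_nrm_sq[OF fV] by simp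
  have "Im z * (nrm f)\<^sup>2 \<le> - Im (ip (Lf - z *\<^sub>C f) f)" unfolding e using d by simp
  also have "\<dots> \<le> cmod (ip (Lf - z *\<^sub>C f) f)" using abs_Im_le_cmod[of "ip (Lf - z *\<^sub>C f) f"] by linarith
  also have "\<dots> \<le> nrm (Lf - z *\<^sub>C f) * nrm f"
    by (rule cauchy_schwarz[OF mem_diff[OF Lf mem_scale[OF fV]] fV])
  finally show ?thesis using pos by (simp add: power2_eq_square)
qed

lemma m_dissipativeI:
  assumes DV: "D \<subseteq> V" and L: "linear_on D V L"
    and diss: "\<And>f. f \<in> D \<Longrightarrow> Im (ip (L f) f) \<le> 0"
    and surj: "\<And>z. Im z > 0 \<Longrightarrow> (\<lambda>f. L f - z *\<^sub>C f) ` D = V"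
  shows "m_dissipative V ip D L"
  unfolding m_dissipative_def
proof (intro conjI allI impI ballI DV)
  fix z :: complex assume z: "Im z > 0"
  show est: "Im z * cnorm ip f \<le> cnorm ip (L f - z *\<^sub>C f)" if "f \<in> D" for f
    using dissipative_lower_bound[OF _ linear_onD(2)[OF L] diss z, of f] that DV unfolding nrm_def by blast
  have "inj_on (\<lambda>f. L f - z *\<^sub>C f) D"
  proof (rule inj_onI)
    fix f g assume f: "f \<in> D" and g: "g \<in> D" and eq: "L f - z *\<^sub>C f = L g - z *\<^sub>C g"
    have fg: "f - g \<in> D" using csubspace_diff[OF linear_onD(1)[OF L] f g] .
    have "L (f - g) - z *\<^sub>C (f - g) = (L f - z *\<^sub>C f) - (L g - z *\<^sub>C g)"
      using linear_on_diff[OF L f g] by (simp add: scaleC_diff_right algebra_simps)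
    then have "L (f - g) - z *\<^sub>C (f - g) = 0" using eq by simp
    then have "Im z * nrm (f - g) \<le> 0" using est[OF fg] by (simp add: nrm_def[symmetric])
    then have "nrm (f - g) = 0" using z nrm_nonneg[of "f - g"] fg DV
      by (meson subsetD mult_le_0_iff not_less order_antisym)
    then show "f = g" using nrm_eq_0[of "f - g"] fg DV by auto
  qed
  then show "bij_betw (\<lambda>f. L f - z *\<^sub>C f) D V" using surj[OF z] by (simp add: bij_betw_def)
qed

end

context hilbert_space
begin

lemma linear_on_resolvent:
  assumes "D \<subseteq> V" and "linear_on D V L" shows "linear_on D V (\<lambda>f. L f - z *\<^sub>C f)"
  using assms
  by (auto simp: linear_on_def scaleC_add_right scaleC_diff_right scaleC_scaleC mult.commute
      intro!: mem_diff mem_scale)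

text \<open>Dissipativity bounds \<open>L - z\<close> below by \<open>Im z\<close>.\<close>
lemma seq_closed_range_resolvent:
  assumes DV: "D \<subseteq> V" and L: "linear_on D V L"
    and diss: "\<And>f. f \<in> D \<Longrightarrow> Im (ip (L f) f) \<le> 0"
    and closed: "closed_op V ip V ip D L" and z: "Im z > 0"
  shows "seq_closed ((\<lambda>f. L f - z *\<^sub>C f) ` D)"
  unfolding seq_closed_def
proof (intro allI impI)
  define Lz where "Lz f = L f - z *\<^sub>C f" for f
  have Lz: "linear_on D V Lz" unfolding Lz_def by (rule linear_on_resolvent[OF DV L])
  have est: "Im z * nrm (f - g) \<le> nrm (Lz f - Lz g)" if "f \<in> D" "g \<in> D" for f g
  proof -
    have fg: "f - g \<in> D" using csubspace_diff[OF linear_onD(1)[OF L] that] .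
    have "Im z * nrm (f - g) \<le> nrm (Lz (f - g))"
      unfolding Lz_def using dissipative_lower_bound[OF _ linear_onD(2)[OF L fg] diss[OF fg] z] fg DV by blast
    then show ?thesis using linear_on_diff[OF Lz that] by simp
  qed
  fix y x assume y: "\<forall>n. y n \<in> (\<lambda>f. L f - z *\<^sub>C f) ` D" and x: "x \<in> V" and yx: "ctends ip y x"
  have "\<forall>n. \<exists>g\<in>D. y n = Lz g" using y unfolding Lz_def by blast
  then obtain f where f: "\<And>n. f n \<in> D" "\<And>n. y n = Lz (f n)" by metis
  have fV: "\<And>n. f n \<in> V" and yV: "\<And>n. y n \<in> V" using f DV linear_onD(2)[OF Lz] by auto
  have "ccauchy ip f"
    using ccauchy_of_lower_bound[OF est z f(1)] ctends_cauchy[OF yV x yx] f(2)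
    unfolding ccauchy_iff by simp
  then obtain p where p: "p \<in> V" "ctends ip f p" using complete fV by blast
  have "(\<lambda>n. L (f n)) = (\<lambda>n. y n + z *\<^sub>C f n)" using f(2) by (simp add: Lz_def)
  moreover have "ctends ip (\<lambda>n. y n + z *\<^sub>C f n) (x + z *\<^sub>C p)"
    using ctends_add[OF yV _ x _ yx ctends_scale[OF fV p]] mem_scale fV p by blast
  ultimately have "p \<in> D \<and> L p = x + z *\<^sub>C p"
    using closed_opD[OF closed f(1) p(1) mem_add[OF x mem_scale[OF p(1)]] p(2)] by simp
  then show "x \<in> (\<lambda>f. L f - z *\<^sub>C f) ` D" by force
qed

lemma m_dissipativeI_closed:
  assumes DV: "D \<subseteq> V" and L: "linear_on D V L"
    and diss: "\<And>f. f \<in> D \<Longrightarrow> Im (ip (L f) f) \<le> 0"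
    and closed: "closed_op V ip V ip D L"
    and orth: "\<And>z u. Im z > 0 \<Longrightarrow> u \<in> V \<Longrightarrow> (\<forall>f\<in>D. ip (L f - z *\<^sub>C f) u = 0) \<Longrightarrow> u = 0"
  shows "m_dissipative V ip D L"
proof (rule m_dissipativeI[OF DV L diss])
  fix z :: complex assume z: "Im z > 0"
  have Lz: "linear_on D V (\<lambda>f. L f - z *\<^sub>C f)" by (rule linear_on_resolvent[OF DV L])
  show "(\<lambda>f. L f - z *\<^sub>C f) ` D = V"
    using closed_subspace_eq_if_orthogonal_trivial[OF _ linear_on_image_csubspace[OF Lz]
        seq_closed_range_resolvent[OF DV L diss closed z]] linear_onD(2)[OF Lz] orth[OF z]
    by blast
qed

end

section \<open>Mixed-order duality\<close>

lemma ex_nonneg_bound: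
  fixes a b :: "'a \<Rightarrow> real"
  assumes "\<And>x. x \<in> D \<Longrightarrow> a x \<le> C * b x" "\<And>x. x \<in> D \<Longrightarrow> b x \<ge> 0"
  shows "\<exists>K\<ge>0. \<forall>x\<in>D. a x \<le> K * b x"
proof (intro exI[of _ "max C 0"] conjI ballI)
  fix x assume x: "x \<in> D"
  have "C * b x \<le> max C 0 * b x" using assms(2)[OF x] by (intro mult_right_mono) auto
  then show "a x \<le> max C 0 * b x" using assms(1)[OF x] by linarith
qed simp

lemma le_if_le_plus_scaled_eps:
  fixes a K :: real
  assumes "\<And>e. e > 0 \<Longrightarrow> a \<le> b + (K + 1) * e" "K \<ge> 0" shows "a \<le> b"
proof (rule field_le_epsilon)
  fix e :: real assume e: "e > 0"
  have "a \<le> b + (K + 1) * (e / (K + 1))" using assms(1)[of "e / (K + 1)"] e assms(2) by simp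
  then show "a \<le> b + e" using assms(2) by simp
qed

locale duality_pairing =
  fixes H Hmp Hpm :: "'h::cvec set" and ipH ipMP ipPM pair :: "'h \<Rightarrow> 'h \<Rightarrow> complex"
  assumes duality: "mixed_duality H ipH Hmp ipMP Hpm ipPM"
    and pairing: "is_duality_pairing H ipH Hmp ipMP Hpm ipPM pair"
begin

sublocale HH: hilbert_space H ipH
  using duality unfolding mixed_duality_def by (blast intro: hilbert_space_of_hilbert_on)
sublocale MP: hilbert_space Hmp ipMP
  using duality unfolding mixed_duality_def by (blast intro: hilbert_space_of_hilbert_on)
sublocale PM: hilbert_space Hpm ipPM
  using duality unfolding mixed_duality_def by (blast intro: hilbert_space_of_hilbert_on)

lemma pair_laws:
  "\<forall>x\<in>Hmp. \<forall>y\<in>Hmp. \<forall>g\<in>Hpm. \<forall>c. pair (x + y) g = pair x g + pair y g \<and> pair (c *\<^sub>C x) g = c * pair x g"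
  "\<forall>h\<in>Hmp. \<forall>x\<in>Hpm. \<forall>y\<in>Hpm. \<forall>c. pair h (x + y) = pair h x + pair h y \<and> pair h (c *\<^sub>C x) = cnj c * pair h x"
  "\<exists>C. \<forall>h\<in>Hmp. \<forall>g\<in>Hpm. cmod (pair h g) \<le> C * cnorm ipMP h * cnorm ipPM g"
  "\<forall>h\<in>H \<inter> Hmp. \<forall>g\<in>H \<inter> Hpm. pair h g = ipH h g"
  by (insert pairing, unfold is_duality_pairing_def, elim conjE, assumption)+

lemma pair_add_left: "x \<in> Hmp \<Longrightarrow> y \<in> Hmp \<Longrightarrow> g \<in> Hpm \<Longrightarrow> pair (x + y) g = pair x g + pair y g"
  using pair_laws(1) by blast
lemma pair_scale_left: "x \<in> Hmp \<Longrightarrow> g \<in> Hpm \<Longrightarrow> pair (c *\<^sub>C x) g = c * pair x g"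
  using pair_laws(1) by blast
lemma pair_add_right: "h \<in> Hmp \<Longrightarrow> x \<in> Hpm \<Longrightarrow> y \<in> Hpm \<Longrightarrow> pair h (x + y) = pair h x + pair h y"
  using pair_laws(2) by blast
lemma pair_scale_right: "h \<in> Hmp \<Longrightarrow> x \<in> Hpm \<Longrightarrow> pair h (c *\<^sub>C x) = cnj c * pair h x"
  using pair_laws(2) by blast
lemma pair_eq_ip: "h \<in> H \<Longrightarrow> h \<in> Hmp \<Longrightarrow> g \<in> H \<Longrightarrow> g \<in> Hpm \<Longrightarrow> pair h g = ipH h g"
  using pair_laws(4) by blast

lemma pair_diff_left: "x \<in> Hmp \<Longrightarrow> y \<in> Hmp \<Longrightarrow> g \<in> Hpm \<Longrightarrow> pair (x - y) g = pair x g - pair y g"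
  using pair_add_left[of x "- y" g] pair_scale_left[of y g "-1"] MP.mem_minus[of y] by (simp add: scaleC_minus1)
lemma pair_minus_right: "h \<in> Hmp \<Longrightarrow> x \<in> Hpm \<Longrightarrow> pair h (- x) = - pair h x"
  using pair_scale_right[of h x "-1"] by (simp add: scaleC_minus1)
lemma pair_diff_right: "h \<in> Hmp \<Longrightarrow> x \<in> Hpm \<Longrightarrow> y \<in> Hpm \<Longrightarrow> pair h (x - y) = pair h x - pair h y"
  using pair_add_right[of h x "- y"] pair_minus_right[of h y] PM.mem_minus[of y] by simp

definition Cpair :: real where
  "Cpair = (SOME K. K \<ge> 0 \<and> (\<forall>p\<in>Hmp \<times> Hpm. cmod (pair (fst p) (snd p)) \<le> K * (MP.nrm (fst p) * PM.nrm (snd p))))"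

lemma Cpair: "Cpair \<ge> 0" "h \<in> Hmp \<Longrightarrow> g \<in> Hpm \<Longrightarrow> cmod (pair h g) \<le> Cpair * MP.nrm h * PM.nrm g"
proof -
  obtain C where C: "\<forall>h\<in>Hmp. \<forall>g\<in>Hpm. cmod (pair h g) \<le> C * cnorm ipMP h * cnorm ipPM g"
    using pair_laws(3) by blast
  have "\<exists>K\<ge>0. \<forall>p\<in>Hmp \<times> Hpm. cmod (pair (fst p) (snd p)) \<le> K * (MP.nrm (fst p) * PM.nrm (snd p))"
    by (rule ex_nonneg_bound[where C = C]) (use C MP.nrm_nonneg PM.nrm_nonneg in \<open>auto simp: MP.nrm_def PM.nrm_def mult.assoc\<close>)
  then have "Cpair \<ge> 0 \<and> (\<forall>p\<in>Hmp \<times> Hpm. cmod (pair (fst p) (snd p)) \<le> Cpair * (MP.nrm (fst p) * PM.nrm (snd p)))"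
    unfolding Cpair_def by (rule someI_ex)
  then show "Cpair \<ge> 0" "h \<in> Hmp \<Longrightarrow> g \<in> Hpm \<Longrightarrow> cmod (pair h g) \<le> Cpair * MP.nrm h * PM.nrm g"
    by (auto simp: mult.assoc)
qed

lemma tendsto_pair:
  assumes a: "\<And>n. a n \<in> Hmp" "x \<in> Hmp" "ctends ipMP a x"
    and b: "\<And>n. b n \<in> Hpm" "y \<in> Hpm" "ctends ipPM b y"
  shows "(\<lambda>n. pair (a n) (b n)) \<longlonglongrightarrow> pair x y"
proof (rule tendsto_complex_dominated)
  have "(\<lambda>n. Cpair * MP.nrm (a n - x) * PM.nrm (b n)) \<longlonglongrightarrow> Cpair * 0 * PM.nrm y"
    by (intro tendsto_mult tendsto_const) (use a b MP.ctends_iff PM.ctends_nrm in auto)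
  moreover have "(\<lambda>n. Cpair * MP.nrm x * PM.nrm (b n - y)) \<longlonglongrightarrow> Cpair * MP.nrm x * 0"
    by (intro tendsto_mult tendsto_const) (use b PM.ctends_iff in auto)
  ultimately show "(\<lambda>n. Cpair * MP.nrm (a n - x) * PM.nrm (b n) + Cpair * MP.nrm x * PM.nrm (b n - y)) \<longlonglongrightarrow> 0"
    using tendsto_add by fastforce
  fix n
  have "pair (a n) (b n) - pair x y = pair (a n - x) (b n) + pair x (b n - y)"
    using pair_diff_left[OF a(1)[of n] a(2) b(1)[of n]] pair_diff_right[OF a(2) b(1)[of n] b(2)] by simp
  then have "cmod (pair (a n) (b n) - pair x y) \<le> cmod (pair (a n - x) (b n)) + cmod (pair x (b n - y))"
    by (metis norm_triangle_ineq)
  also have "\<dots> \<le> Cpair * MP.nrm (a n - x) * PM.nrm (b n) + Cpair * MP.nrm x * PM.nrm (b n - y)"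
    by (rule add_mono[OF Cpair(2)[OF MP.mem_diff[OF a(1) a(2)] b(1)] Cpair(2)[OF a(2) PM.mem_diff[OF b(1) b(2)]]])
  finally show "cmod (pair (a n) (b n) - pair x y)
      \<le> Cpair * MP.nrm (a n - x) * PM.nrm (b n) + Cpair * MP.nrm x * PM.nrm (b n - y)" .
qed

lemma dense_MP: "h \<in> Hmp \<Longrightarrow> e > 0 \<Longrightarrow> \<exists>d\<in>H \<inter> Hmp. MP.nrm (h - d) < e"
  using duality unfolding mixed_duality_def dense_in_def MP.nrm_def by blast
lemma dense_PM: "g \<in> Hpm \<Longrightarrow> e > 0 \<Longrightarrow> \<exists>d\<in>H \<inter> Hpm. PM.nrm (g - d) < e"
  using duality unfolding mixed_duality_def dense_in_def PM.nrm_def by blast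

lemma MP_nrm_le_if_dual_bound:
  "h \<in> H \<Longrightarrow> h \<in> Hmp \<Longrightarrow> c \<ge> 0 \<Longrightarrow>
    (\<And>g. g \<in> H \<Longrightarrow> g \<in> Hpm \<Longrightarrow> g \<noteq> 0 \<Longrightarrow> cmod (ipH g h) \<le> c * PM.nrm g) \<Longrightarrow> MP.nrm h \<le> c"
  using duality PM.nrm_eq_0 PM.nrm_nonneg unfolding mixed_duality_def dual_norm_def MP.nrm_def PM.nrm_def
  by (simp add: pos_divide_le_eq less_le)
lemma PM_nrm_le_if_dual_bound:
  "g \<in> H \<Longrightarrow> g \<in> Hpm \<Longrightarrow> c \<ge> 0 \<Longrightarrow>
    (\<And>h. h \<in> H \<Longrightarrow> h \<in> Hmp \<Longrightarrow> h \<noteq> 0 \<Longrightarrow> cmod (ipH h g) \<le> c * MP.nrm h) \<Longrightarrow> PM.nrm g \<le> c"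
  using duality MP.nrm_eq_0 MP.nrm_nonneg unfolding mixed_duality_def dual_norm_def MP.nrm_def PM.nrm_def
  by (simp add: pos_divide_le_eq less_le)

end

context duality_pairing
begin

lemma pair_nondegenerate_left:
  assumes h: "h \<in> Hmp" and z: "\<And>g. g \<in> Hpm \<Longrightarrow> pair h g = 0" shows "h = 0"
proof -
  have "MP.nrm h \<le> 0 + (Cpair + 1) * e" if e: "e > 0" for e
  proof -
    obtain d where d: "d \<in> H" "d \<in> Hmp" "MP.nrm (h - d) < e" using dense_MP[OF h e] by blast
    have "MP.nrm d \<le> Cpair * MP.nrm (d - h)"
    proof (rule MP_nrm_le_if_dual_bound[OF d(1,2)])
      show "0 \<le> Cpair * MP.nrm (d - h)" using Cpair(1) MP.nrm_nonneg[OF MP.mem_diff[OF d(2) h]] by simp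
      fix g assume g: "g \<in> H" "g \<in> Hpm"
      have "ipH d g = pair (d - h) g" using pair_eq_ip[OF d(1,2) g] pair_diff_left[OF d(2) h g(2)] z[OF g(2)] by simp
      then show "cmod (ipH g d) \<le> Cpair * MP.nrm (d - h) * PM.nrm g"
        using HH.conj_sym[OF d(1) g(1)] Cpair(2)[OF MP.mem_diff[OF d(2) h] g(2)] by simp
    qed
    then have "MP.nrm h \<le> (Cpair + 1) * MP.nrm (h - d)"
      using MP.nrm_triangle[OF d(2) MP.mem_diff[OF h d(2)]] MP.nrm_commute[OF d(2) h] by (simp add: algebra_simps)
    also have "\<dots> \<le> (Cpair + 1) * e" using d(3) Cpair(1) by (simp add: mult_left_mono)
    finally show ?thesis by simp
  qed
  then have "MP.nrm h \<le> 0" by (rule le_if_le_plus_scaled_eps[OF _ Cpair(1)])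
  then show ?thesis using MP.nrm_eq_0[OF h] MP.nrm_nonneg[OF h] by simp
qed

lemma pair_nondegenerate_right:
  assumes g: "g \<in> Hpm" and z: "\<And>h. h \<in> Hmp \<Longrightarrow> pair h g = 0" shows "g = 0"
proof -
  have "PM.nrm g \<le> 0 + (Cpair + 1) * e" if e: "e > 0" for e
  proof -
    obtain d where d: "d \<in> H" "d \<in> Hpm" "PM.nrm (g - d) < e" using dense_PM[OF g e] by blast
    have "PM.nrm d \<le> Cpair * PM.nrm (d - g)"
    proof (rule PM_nrm_le_if_dual_bound[OF d(1,2)])
      show "0 \<le> Cpair * PM.nrm (d - g)" using Cpair(1) PM.nrm_nonneg[OF PM.mem_diff[OF d(2) g]] by simp
      fix h assume h: "h \<in> H" "h \<in> Hmp"
      have "ipH h d = pair h (d - g)" using pair_eq_ip[OF h d(1,2)] pair_diff_right[OF h(2) d(2) g] z[OF h(2)] by simp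
      then show "cmod (ipH h d) \<le> Cpair * PM.nrm (d - g) * MP.nrm h"
        using Cpair(2)[OF h(2) PM.mem_diff[OF d(2) g]] by (simp add: mult_ac)
    qed
    then have "PM.nrm g \<le> (Cpair + 1) * PM.nrm (g - d)"
      using PM.nrm_triangle[OF d(2) PM.mem_diff[OF g d(2)]] PM.nrm_commute[OF d(2) g] by (simp add: algebra_simps)
    also have "\<dots> \<le> (Cpair + 1) * e" using d(3) Cpair(1) by (simp add: mult_left_mono)
    finally show ?thesis by simp
  qed
  then have "PM.nrm g \<le> 0" by (rule le_if_le_plus_scaled_eps[OF _ Cpair(1)])
  then show ?thesis using PM.nrm_eq_0[OF g] PM.nrm_nonneg[OF g] by simp
qed

end

locale duality_iso = duality_pairing +
  fixes V
  assumes V: "lin_homeo H ipH Hmp ipMP V"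
begin

abbreviation Vs where "Vs \<equiv> Vsharp H ipH pair V"

definition Vi where "Vi = the_inv_into H V"

lemma V_linear: "linear_on H Hmp V" and V_bij: "bij_betw V H Hmp"
  using V unfolding lin_homeo_def by blast+

lemma V_mem: "f \<in> H \<Longrightarrow> V f \<in> Hmp" using V_linear linear_onD(2) by blast
lemma V_add: "f \<in> H \<Longrightarrow> g \<in> H \<Longrightarrow> V (f + g) = V f + V g" using V_linear linear_onD(3) by blast
lemma V_scale: "f \<in> H \<Longrightarrow> V (c *\<^sub>C f) = c *\<^sub>C V f" using V_linear linear_onD(4) by blast
lemma V_diff: "f \<in> H \<Longrightarrow> g \<in> H \<Longrightarrow> V (f - g) = V f - V g" using V_linear linear_on_diff by blast
lemma V_inj: "f \<in> H \<Longrightarrow> g \<in> H \<Longrightarrow> V f = V g \<Longrightarrow> f = g"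
  using V_bij unfolding bij_betw_def inj_on_def by blast
lemma Vi_mem: "h \<in> Hmp \<Longrightarrow> Vi h \<in> H"
  unfolding Vi_def using V_bij by (metis bij_betw_def the_inv_into_into subset_refl)
lemma V_Vi: "h \<in> Hmp \<Longrightarrow> V (Vi h) = h"
  unfolding Vi_def using V_bij by (metis bij_betw_def f_the_inv_into_f)

lemma V_bounded: "\<exists>K\<ge>0. \<forall>f\<in>H. MP.nrm (V f) \<le> K * HH.nrm f"
proof -
  obtain C where C: "\<forall>x\<in>H. cnorm ipMP (V x) \<le> C * cnorm ipH x"
    using V unfolding lin_homeo_def bounded_on_def by blast
  show ?thesis
    by (rule ex_nonneg_bound[where C = C]) (use C HH.nrm_nonneg in \<open>auto simp: MP.nrm_def HH.nrm_def\<close>)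
qed

lemma Vi_bounded: "\<exists>K\<ge>0. \<forall>h\<in>Hmp. HH.nrm (Vi h) \<le> K * MP.nrm h"
proof -
  obtain C where C: "\<forall>x\<in>Hmp. cnorm ipH (Vi x) \<le> C * cnorm ipMP x"
    using V unfolding lin_homeo_def bounded_on_def Vi_def by blast
  show ?thesis
    by (rule ex_nonneg_bound[where C = C]) (use C MP.nrm_nonneg in \<open>auto simp: MP.nrm_def HH.nrm_def\<close>)
qed

lemma V_tends:
  assumes "\<And>n. f n \<in> H" "x \<in> H" "ctends ipH f x"
  shows "ctends ipMP (\<lambda>n. V (f n)) (V x)"
proof -
  obtain K where K: "\<And>f. f \<in> H \<Longrightarrow> MP.nrm (V f) \<le> K * HH.nrm f" using V_bounded by blast
  show ?thesis
  proof (rule MP.ctends_bound[OF V_mem[OF assms(1)] V_mem[OF assms(2)]])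
    show "MP.nrm (V (f n) - V x) \<le> K * HH.nrm (f n - x)" for n
      using K[OF HH.mem_diff[OF assms(1,2)]] V_diff[OF assms(1,2)] by simp
    show "(\<lambda>n. K * HH.nrm (f n - x)) \<longlonglongrightarrow> 0"
      using tendsto_mult_right_zero assms(3) HH.ctends_iff by blast
  qed
qed

lemma Vs_char:
  assumes g: "g \<in> Hpm" shows "Vs g \<in> H" "\<And>f. f \<in> H \<Longrightarrow> pair (V f) g = ipH f (Vs g)"
proof -
  obtain K where K: "\<And>f. f \<in> H \<Longrightarrow> MP.nrm (V f) \<le> K * HH.nrm f" using V_bounded by blast
  have "\<exists>y\<in>H. \<forall>x\<in>H. pair (V x) g = ipH x y"
  proof (rule HH.riesz_representation)
    show "pair (V (x + y)) g = pair (V x) g + pair (V y) g" if "x \<in> H" "y \<in> H" for x y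
      using that V_add V_mem pair_add_left g by simp
    show "pair (V (c *\<^sub>C x)) g = c * pair (V x) g" if "x \<in> H" for x c
      using that V_scale V_mem pair_scale_left g by simp
    show "cmod (pair (V x) g) \<le> (Cpair * K * PM.nrm g) * HH.nrm x" if x: "x \<in> H" for x
      using Cpair(2)[OF V_mem[OF x] g] K[OF x] Cpair(1) PM.nrm_nonneg[OF g]
      by (smt (verit, ccfv_SIG) mult.commute mult.left_commute mult_left_mono)
  qed
  then obtain y where y: "y \<in> H" "\<forall>x\<in>H. pair (V x) g = ipH x y" by blast
  have "Vs g = y" unfolding Vsharp_def
  proof (rule the_equality)
    show "y \<in> H \<and> (\<forall>f\<in>H. pair (V f) g = ipH f y)" using y by blast
    show "h = y" if "h \<in> H \<and> (\<forall>f\<in>H. pair (V f) g = ipH f h)" for h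
      by (rule HH.eq_if_ip_right_eq) (use that y in auto)
  qed
  then show "Vs g \<in> H" "\<And>f. f \<in> H \<Longrightarrow> pair (V f) g = ipH f (Vs g)" using y by auto
qed

lemma Vs_mem: "g \<in> Hpm \<Longrightarrow> Vs g \<in> H"
  using Vs_char by blast
lemma pair_V_eq_ip_Vs: "g \<in> Hpm \<Longrightarrow> f \<in> H \<Longrightarrow> pair (V f) g = ipH f (Vs g)"
  using Vs_char by blast
lemma pair_eq_ip_Vi_Vs: "g \<in> Hpm \<Longrightarrow> h \<in> Hmp \<Longrightarrow> pair h g = ipH (Vi h) (Vs g)"
  using pair_V_eq_ip_Vs[of g "Vi h"] V_Vi Vi_mem by simp

lemma Vs_linear: "linear_on Hpm H Vs"
  unfolding linear_on_def
proof (intro conjI ballI allI)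
  show "csubspace Hpm" by (rule PM.subspace)
  show "Vs g \<in> H" if "g \<in> Hpm" for g using Vs_mem that .
  show "Vs (g1 + g2) = Vs g1 + Vs g2" if g: "g1 \<in> Hpm" "g2 \<in> Hpm" for g1 g2
  proof (rule HH.eq_if_ip_right_eq)
    fix f assume f: "f \<in> H"
    show "ipH f (Vs (g1 + g2)) = ipH f (Vs g1 + Vs g2)"
      using pair_V_eq_ip_Vs[OF PM.mem_add[OF g] f] pair_add_right[OF V_mem[OF f] g]
        pair_V_eq_ip_Vs[OF g(1) f] pair_V_eq_ip_Vs[OF g(2) f] HH.add_right[OF Vs_mem Vs_mem f] g
      by simp
  qed (use g Vs_mem PM.mem_add HH.mem_add in auto)
  show "Vs (c *\<^sub>C g) = c *\<^sub>C Vs g" if g: "g \<in> Hpm" for g c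
  proof (rule HH.eq_if_ip_right_eq)
    fix f assume f: "f \<in> H"
    show "ipH f (Vs (c *\<^sub>C g)) = ipH f (c *\<^sub>C Vs g)"
      using pair_V_eq_ip_Vs[OF PM.mem_scale[OF g] f] pair_scale_right[OF V_mem[OF f] g]
        pair_V_eq_ip_Vs[OF g f] HH.scale_right[OF f Vs_mem[OF g]]
      by simp
  qed (use g Vs_mem PM.mem_scale HH.mem_scale in auto)
qed

lemma Vs_diff: "g1 \<in> Hpm \<Longrightarrow> g2 \<in> Hpm \<Longrightarrow> Vs (g1 - g2) = Vs g1 - Vs g2"
  using linear_on_diff[OF Vs_linear] .

lemma Vs_bounded: "\<exists>C. \<forall>g\<in>Hpm. HH.nrm (Vs g) \<le> C * PM.nrm g"
proof -
  obtain K where K: "K \<ge> 0" "\<And>f. f \<in> H \<Longrightarrow> MP.nrm (V f) \<le> K * HH.nrm f"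
    using V_bounded by blast
  have "HH.nrm (Vs g) \<le> (Cpair * K) * PM.nrm g" if g: "g \<in> Hpm" for g
  proof (cases "Vs g = 0")
    case False
    have y: "Vs g \<in> H" using Vs_mem[OF g] .
    then have pos: "HH.nrm (Vs g) > 0" using False HH.nrm_nonneg HH.nrm_eq_0 by (simp add: less_le)
    have "(HH.nrm (Vs g))\<^sup>2 \<le> cmod (pair (V (Vs g)) g)"
      using HH.nrm_sq[OF y] pair_V_eq_ip_Vs[OF g y] complex_Re_le_cmod by simp
    also have "\<dots> \<le> Cpair * (K * HH.nrm (Vs g)) * PM.nrm g"
      using Cpair(2)[OF V_mem[OF y] g] K(2)[OF y] Cpair(1) PM.nrm_nonneg[OF g]
      by (smt (verit) mult_left_mono mult_right_mono)
    finally have "HH.nrm (Vs g) * HH.nrm (Vs g) \<le> (Cpair * K * PM.nrm g) * HH.nrm (Vs g)"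
      by (simp add: power2_eq_square algebra_simps)
    then show ?thesis using pos by simp
  qed (use g PM.nrm_nonneg Cpair(1) K(1) in simp)
  then show ?thesis by blast
qed

lemma Vs_tends:
  assumes "\<And>n. g n \<in> Hpm" "y \<in> Hpm" "ctends ipPM g y"
  shows "ctends ipH (\<lambda>n. Vs (g n)) (Vs y)"
proof -
  obtain C where C: "\<And>g. g \<in> Hpm \<Longrightarrow> HH.nrm (Vs g) \<le> C * PM.nrm g" using Vs_bounded by blast
  show ?thesis
  proof (rule HH.ctends_bound[OF Vs_mem[OF assms(1)] Vs_mem[OF assms(2)]])
    show "HH.nrm (Vs (g n) - Vs y) \<le> C * PM.nrm (g n - y)" for n
      using C[OF PM.mem_diff[OF assms(1,2)]] Vs_diff[OF assms(1,2)] by simp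
    show "(\<lambda>n. C * PM.nrm (g n - y)) \<longlonglongrightarrow> 0"
      using tendsto_mult_right_zero assms(3) PM.ctends_iff by blast
  qed
qed

lemma Vs_inj: assumes "g1 \<in> Hpm" "g2 \<in> Hpm" "Vs g1 = Vs g2" shows "g1 = g2"
proof -
  have "g1 - g2 = 0"
  proof (rule pair_nondegenerate_right[OF PM.mem_diff[OF assms(1,2)]])
    fix h assume "h \<in> Hmp"
    then show "pair h (g1 - g2) = 0"
      using pair_eq_ip_Vi_Vs[OF PM.mem_diff[OF assms(1,2)]] Vs_diff[OF assms(1,2)] assms(3) Vi_mem by simp
  qed
  then show ?thesis by simp
qed

end

context duality_iso
begin

lemma Vs_lower_bound:
  assumes K: "K \<ge> 0" "\<And>h. h \<in> Hmp \<Longrightarrow> HH.nrm (Vi h) \<le> K * MP.nrm h" and g: "g \<in> Hpm"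
  shows "PM.nrm g \<le> K * HH.nrm (Vs g)"
proof -
  have y: "Vs g \<in> H" using Vs_mem[OF g] .
  have "PM.nrm g \<le> K * HH.nrm (Vs g) + (Cpair + 1) * e" if e: "e > 0" for e
  proof -
    obtain d where d: "d \<in> H" "d \<in> Hpm" "PM.nrm (g - d) < e" using dense_PM[OF g e] by blast
    have "PM.nrm d \<le> K * HH.nrm (Vs g) + Cpair * PM.nrm (d - g)"
    proof (rule PM_nrm_le_if_dual_bound[OF d(1,2)])
      show "0 \<le> K * HH.nrm (Vs g) + Cpair * PM.nrm (d - g)"
        using Cpair(1) K(1) HH.nrm_nonneg[OF y] PM.nrm_nonneg[OF PM.mem_diff[OF d(2) g]] by simp
      fix h assume h: "h \<in> H" "h \<in> Hmp"
      have "ipH h d = pair h g + pair h (d - g)"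
        using pair_eq_ip[OF h d(1,2)] pair_diff_right[OF h(2) d(2) g] by simp
      then have "cmod (ipH h d) \<le> cmod (pair h g) + cmod (pair h (d - g))"
        by (metis norm_triangle_ineq)
      also have "cmod (pair h g) \<le> HH.nrm (Vi h) * HH.nrm (Vs g)"
        using pair_eq_ip_Vi_Vs[OF g h(2)] HH.cauchy_schwarz[OF Vi_mem[OF h(2)] y] by simp
      also have "\<dots> \<le> K * MP.nrm h * HH.nrm (Vs g)"
        using K(2)[OF h(2)] HH.nrm_nonneg[OF y] by (simp add: mult_right_mono)
      also have "cmod (pair h (d - g)) \<le> Cpair * MP.nrm h * PM.nrm (d - g)"
        by (rule Cpair(2)[OF h(2) PM.mem_diff[OF d(2) g]])
      finally show "cmod (ipH h d) \<le> (K * HH.nrm (Vs g) + Cpair * PM.nrm (d - g)) * MP.nrm h"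
        by (simp add: algebra_simps)
    qed
    then have "PM.nrm g \<le> K * HH.nrm (Vs g) + (Cpair + 1) * PM.nrm (g - d)"
      using PM.nrm_triangle[OF d(2) PM.mem_diff[OF g d(2)]] PM.nrm_commute[OF d(2) g]
      by (simp add: algebra_simps)
    also have "\<dots> \<le> K * HH.nrm (Vs g) + (Cpair + 1) * e" using d(3) Cpair(1) by simp
    finally show ?thesis .
  qed
  then show ?thesis by (rule le_if_le_plus_scaled_eps[OF _ Cpair(1)])
qed

lemma Vs_bounded_below: "\<exists>c>0. \<forall>g\<in>Hpm. c * PM.nrm g \<le> HH.nrm (Vs g)"
proof -
  obtain K where K: "K \<ge> 0" "\<And>h. h \<in> Hmp \<Longrightarrow> HH.nrm (Vi h) \<le> K * MP.nrm h"
    using Vi_bounded by blast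
  have "1 / (K + 1) * PM.nrm g \<le> HH.nrm (Vs g)" if g: "g \<in> Hpm" for g
    using Vs_lower_bound[OF K g] K(1) HH.nrm_nonneg[OF Vs_mem[OF g]] by (simp add: field_simps)
  moreover have "1 / (K + 1) > 0" using K(1) by simp
  ultimately show ?thesis by blast
qed

lemma Vs_surj: "Vs ` Hpm = H"
proof (rule HH.closed_subspace_eq_if_orthogonal_trivial)
  show "Vs ` Hpm \<subseteq> H" using Vs_mem by blast
  show "csubspace (Vs ` Hpm)" by (rule linear_on_image_csubspace[OF Vs_linear])
  show "HH.seq_closed (Vs ` Hpm)" unfolding HH.seq_closed_def
  proof (intro allI impI)
    fix y x assume y: "\<forall>n. y n \<in> Vs ` Hpm" and x: "x \<in> H" and yx: "ctends ipH y x"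
    have "\<forall>n. \<exists>g\<in>Hpm. y n = Vs g" using y by blast
    then obtain g where g: "\<And>n. g n \<in> Hpm" "\<And>n. y n = Vs (g n)" by metis
    have "y = (\<lambda>n. Vs (g n))" using g(2) by blast
    then have gx: "ctends ipH (\<lambda>n. Vs (g n)) x" using yx by simp
    obtain c where c: "c > 0" "\<And>g. g \<in> Hpm \<Longrightarrow> c * PM.nrm g \<le> HH.nrm (Vs g)"
      using Vs_bounded_below by blast
    have "ccauchy ipPM g"
    proof (rule PM.ccauchy_of_lower_bound[OF _ c(1) g(1)])
      show "c * PM.nrm (a - b) \<le> HH.nrm (Vs a - Vs b)" if "a \<in> Hpm" "b \<in> Hpm" for a b
        using c(2)[OF PM.mem_diff[OF that]] Vs_diff[OF that] by simp
      show "\<forall>e>0. \<exists>N. \<forall>m\<ge>N. \<forall>n\<ge>N. HH.nrm (Vs (g m) - Vs (g n)) < e"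
        using HH.ctends_cauchy[of "\<lambda>n. Vs (g n)", OF Vs_mem[OF g(1)] x gx] unfolding HH.ccauchy_iff .
    qed
    then obtain k where k: "k \<in> Hpm" "ctends ipPM g k" using PM.complete g(1) by blast
    have "x = Vs k"
      using HH.ctends_unique[of "\<lambda>n. Vs (g n)", OF Vs_mem[OF g(1)] x Vs_mem[OF k(1)] gx Vs_tends[OF g(1) k]] .
    then show "x \<in> Vs ` Hpm" using k(1) by blast
  qed
  show "u = 0" if u: "u \<in> H" "\<forall>s\<in>Vs ` Hpm. ipH s u = 0" for u
  proof -
    have "V u = 0"
    proof (rule pair_nondegenerate_left[OF V_mem[OF u(1)]])
      fix g assume g: "g \<in> Hpm"
      have "ipH (Vs g) u = 0" using u(2) g by blast
      then show "pair (V u) g = 0"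
        using HH.conj_sym[OF Vs_mem[OF g] u(1)] pair_V_eq_ip_Vs[OF g u(1)] by simp
    qed
    then show "u = 0" using V_inj[OF u(1) HH.mem_zero] linear_on_0[OF V_linear] by simp
  qed
qed

end

section \<open>Accretive boundary operators\<close>

lemma linear_on_extend_by_vector:
  assumes Z: "linear_on D W Z" and W: "csubspace W" and h0: "h0 \<notin> D" and k0: "k0 \<in> W"
  shows "\<exists>Z'. linear_on {h + c *\<^sub>C h0 |h c. h \<in> D} W Z' \<and> (\<forall>h\<in>D. \<forall>c. Z' (h + c *\<^sub>C h0) = Z h + c *\<^sub>C k0)"
proof -
  have D: "csubspace D" by (rule linear_onD(1)[OF Z])
  have coeff_unique: "c = c'" if "h \<in> D" "h' \<in> D" "h + c *\<^sub>C h0 = h' + c' *\<^sub>C h0" for h c h' c'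
  proof (rule ccontr)
    assume ne: "c \<noteq> c'"
    have "(c - c') *\<^sub>C h0 = h' - h"
      using that(3) by (simp add: scaleC_diff_left algebra_simps)
    then have "(1 / (c - c')) *\<^sub>C ((c - c') *\<^sub>C h0) = (1 / (c - c')) *\<^sub>C (h' - h)" by simp
    then have "h0 = (1 / (c - c')) *\<^sub>C (h' - h)"
      using ne by (simp add: scaleC_scaleC scaleC_one)
    then show False using h0 csubspace_scale[OF D csubspace_diff[OF D that(2,1)]] by simp
  qed
  define coeff where "coeff x = (THE c. \<exists>h\<in>D. x = h + c *\<^sub>C h0)" for x
  have coeff: "coeff (h + c *\<^sub>C h0) = c" if "h \<in> D" for h c
    unfolding coeff_def by (rule the_equality) (use that coeff_unique in blast)+
  define Z' where "Z' x = Z (x - coeff x *\<^sub>C h0) + coeff x *\<^sub>C k0" for x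
  have Z': "Z' (h + c *\<^sub>C h0) = Z h + c *\<^sub>C k0" if "h \<in> D" for h c
    unfolding Z'_def coeff[OF that] by simp
  have "linear_on {h + c *\<^sub>C h0 |h c. h \<in> D} W Z'"
    unfolding linear_on_def csubspace_def
  proof (intro conjI ballI allI; (elim CollectE exE conjE)?)
    have "0 = 0 + 0 *\<^sub>C h0" by simp
    then show "0 \<in> {h + c *\<^sub>C h0 |h c. h \<in> D}" using csubspace_0[OF D] by blast
    fix x y h1 c1 h2 c2 c assume x: "x = h1 + c1 *\<^sub>C h0" "h1 \<in> D" and y: "y = h2 + c2 *\<^sub>C h0" "h2 \<in> D"
    have sum: "x + y = (h1 + h2) + (c1 + c2) *\<^sub>C h0" using x y by (simp add: scaleC_add_left algebra_simps)
    have scaled: "c *\<^sub>C x = c *\<^sub>C h1 + (c * c1) *\<^sub>C h0" using x by (simp add: scaleC_add_right scaleC_scaleC)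
    show "x + y \<in> {h + c *\<^sub>C h0 |h c. h \<in> D}" using sum csubspace_add[OF D x(2) y(2)] by blast
    show "c *\<^sub>C x \<in> {h + c *\<^sub>C h0 |h c. h \<in> D}" using scaled csubspace_scale[OF D x(2)] by blast
    show "Z' x \<in> W" using x Z' linear_onD(2)[OF Z] csubspace_add[OF W] csubspace_scale[OF W] k0 by simp
    have "Z' (x + y) = Z (h1 + h2) + (c1 + c2) *\<^sub>C k0"
      unfolding sum by (rule Z'[OF csubspace_add[OF D x(2) y(2)]])
    then show "Z' (x + y) = Z' x + Z' y"
      using x y Z'[OF x(2)] Z'[OF y(2)] linear_onD(3)[OF Z x(2) y(2)]
      by (simp add: scaleC_add_left algebra_simps)
    have "Z' (c *\<^sub>C x) = Z (c *\<^sub>C h1) + (c * c1) *\<^sub>C k0"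
      unfolding scaled by (rule Z'[OF csubspace_scale[OF D x(2)]])
    then show "Z' (c *\<^sub>C x) = c *\<^sub>C Z' x"
      using x Z'[OF x(2)] linear_onD(4)[OF Z x(2)] by (simp add: scaleC_add_right scaleC_scaleC)
  qed
  then show ?thesis using Z' by blast
qed

text \<open>\<open>accretive_extension pair domZ Z h0 k0\<close> says that the linear span of the graph of \<open>Z\<close> and
  \<open>(h0, k0)\<close> is accretive; \<open>maximal_accretive_graph\<close> says that the graph of \<open>Z\<close> is maximal among
  accretive linear relations, not merely among accretive operators.\<close>
definition accretive_extension :: "('h::cvec \<Rightarrow> 'h \<Rightarrow> complex) \<Rightarrow> 'h set \<Rightarrow> ('h \<Rightarrow> 'h) \<Rightarrow> 'h \<Rightarrow> 'h \<Rightarrow> bool" where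
  "accretive_extension pair domZ Z h0 k0 \<longleftrightarrow>
     (\<forall>h\<in>domZ. \<forall>c. 0 \<le> Re (pair (h + c *\<^sub>C h0) (Z h + c *\<^sub>C k0)))"

definition maximal_accretive_graph ::
    "'h::cvec set \<Rightarrow> 'h set \<Rightarrow> ('h \<Rightarrow> 'h \<Rightarrow> complex) \<Rightarrow> 'h set \<Rightarrow> ('h \<Rightarrow> 'h) \<Rightarrow> bool" where
  "maximal_accretive_graph Hmp Hpm pair domZ Z \<longleftrightarrow> accretive_Z pair domZ Z \<and>
     (\<forall>h0\<in>Hmp. \<forall>k0\<in>Hpm. accretive_extension pair domZ Z h0 k0 \<longrightarrow> h0 \<in> domZ \<and> Z h0 = k0)"

locale duality_operator = duality_pairing +
  fixes domZ and Z
  assumes domZ: "domZ \<subseteq> Hmp" and Z: "linear_on domZ Hpm Z"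
begin

lemma domZ_subspace: "csubspace domZ" using Z linear_onD(1) by blast
lemma Z_mem: "h \<in> domZ \<Longrightarrow> Z h \<in> Hpm" using Z linear_onD(2) by blast
lemma domZ_mem: "h \<in> domZ \<Longrightarrow> h \<in> Hmp" using domZ by blast

lemma accretive_extensionI:
  "(\<And>h c. h \<in> domZ \<Longrightarrow> 0 \<le> Re (pair (h + c *\<^sub>C h0) (Z h + c *\<^sub>C k0))) \<Longrightarrow>
    accretive_extension pair domZ Z h0 k0"
  unfolding accretive_extension_def by blast

lemma maximal_accretive_graphD:
  "maximal_accretive_graph Hmp Hpm pair domZ Z \<Longrightarrow> h0 \<in> Hmp \<Longrightarrow> k0 \<in> Hpm \<Longrightarrow>
    accretive_extension pair domZ Z h0 k0 \<Longrightarrow> h0 \<in> domZ \<and> Z h0 = k0"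
  unfolding maximal_accretive_graph_def by blast

lemma max_accretive_if_maximal_accretive_graph:
  assumes max: "maximal_accretive_graph Hmp Hpm pair domZ Z"
  shows "max_accretive_Z Hmp Hpm pair domZ Z"
  unfolding max_accretive_Z_def
proof (intro conjI allI impI subset_antisym)
  show "accretive_Z pair domZ Z" using max unfolding maximal_accretive_graph_def by blast
  fix D' Z'
  assume "D' \<subseteq> Hmp \<and> linear_on D' Hpm Z' \<and> domZ \<subseteq> D' \<and> (\<forall>h\<in>domZ. Z' h = Z h) \<and> accretive_Z pair D' Z'"
  then have D': "D' \<subseteq> Hmp" "linear_on D' Hpm Z'" "domZ \<subseteq> D'" "\<forall>h\<in>domZ. Z' h = Z h"
    "accretive_Z pair D' Z'" by blast+
  then show "domZ \<subseteq> D'" by blast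
  show "D' \<subseteq> domZ"
  proof
    fix h0 assume h0: "h0 \<in> D'"
    have "accretive_extension pair domZ Z h0 (Z' h0)"
    proof (rule accretive_extensionI)
      fix h c assume h: "h \<in> domZ"
      have hc: "h + c *\<^sub>C h0 \<in> D'"
        using D' h h0 csubspace_add csubspace_scale linear_onD(1) by blast
      have "Z' (h + c *\<^sub>C h0) = Z h + c *\<^sub>C Z' h0"
        using linear_onD(3,4)[OF D'(2)] h h0 D'(3,4) csubspace_scale[OF linear_onD(1)[OF D'(2)] h0] by auto
      then show "0 \<le> Re (pair (h + c *\<^sub>C h0) (Z h + c *\<^sub>C Z' h0))"
        using D'(5) hc unfolding accretive_Z_def by fastforce
    qed
    then show "h0 \<in> domZ" using maximal_accretive_graphD[OF max] h0 D'(1,2) linear_onD(2) by blast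
  qed
qed

lemma closed_if_maximal_accretive_graph:
  assumes max: "maximal_accretive_graph Hmp Hpm pair domZ Z"
  shows "closed_op Hmp ipMP Hpm ipPM domZ Z"
  unfolding closed_op_def
proof (intro allI impI; elim conjE)
  fix hs x y assume hs: "\<forall>n. hs n \<in> domZ" and x: "x \<in> Hmp" and y: "y \<in> Hpm"
    and hx: "ctends ipMP hs x" and hy: "ctends ipPM (\<lambda>n. Z (hs n)) y"
  have acc: "accretive_Z pair domZ Z" using max unfolding maximal_accretive_graph_def by blast
  have "accretive_extension pair domZ Z x y"
  proof (rule accretive_extensionI)
    fix h c assume h: "h \<in> domZ"
    have hsm: "\<And>n. hs n \<in> Hmp" and Zhs: "\<And>n. Z (hs n) \<in> Hpm" using hs domZ_mem Z_mem by auto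
    have hcs: "h + c *\<^sub>C hs n \<in> domZ" for n using hs h domZ_subspace csubspace_add csubspace_scale by blast
    have "(\<lambda>n. pair (h + c *\<^sub>C hs n) (Z h + c *\<^sub>C Z (hs n))) \<longlonglongrightarrow> pair (h + c *\<^sub>C x) (Z h + c *\<^sub>C y)"
      using tendsto_pair[OF _ _ MP.ctends_add[OF _ _ _ _ MP.ctends_const MP.ctends_scale[OF hsm x hx]]
          _ _ PM.ctends_add[OF _ _ _ _ PM.ctends_const PM.ctends_scale[OF Zhs y hy]]]
        h x y hsm Zhs domZ_mem Z_mem MP.mem_add MP.mem_scale PM.mem_add PM.mem_scale by simp
    moreover have "Z (h + c *\<^sub>C hs n) = Z h + c *\<^sub>C Z (hs n)" for n
      using linear_onD(3,4)[OF Z] h hs csubspace_scale[OF domZ_subspace] by simp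
    then have "0 \<le> Re (pair (h + c *\<^sub>C hs n) (Z h + c *\<^sub>C Z (hs n)))" for n
      using acc hcs[of n] unfolding accretive_Z_def by fastforce
    ultimately show "0 \<le> Re (pair (h + c *\<^sub>C x) (Z h + c *\<^sub>C y))"
      using LIMSEQ_le_const[OF tendsto_Re] by fastforce
  qed
  then show "x \<in> domZ \<and> Z x = y" using maximal_accretive_graphD[OF max x y] by blast
qed

lemma max_accretive_mem_dom:
  assumes max: "max_accretive_Z Hmp Hpm pair domZ Z" and h0: "h0 \<in> Hmp" and k0: "k0 \<in> Hpm"
    and ext: "accretive_extension pair domZ Z h0 k0"
  shows "h0 \<in> domZ"
proof (rule ccontr)
  assume "h0 \<notin> domZ"
  then obtain Z' where Z': "linear_on {h + c *\<^sub>C h0 |h c. h \<in> domZ} Hpm Z'"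
    "\<And>h c. h \<in> domZ \<Longrightarrow> Z' (h + c *\<^sub>C h0) = Z h + c *\<^sub>C k0"
    using linear_on_extend_by_vector[OF Z PM.subspace _ k0] by blast
  let ?D' = "{h + c *\<^sub>C h0 |h c. h \<in> domZ}"
  have "?D' = domZ"
  proof (rule max[unfolded max_accretive_Z_def, THEN conjunct2, rule_format], intro conjI)
    show "?D' \<subseteq> Hmp" using domZ_mem MP.mem_add MP.mem_scale h0 by blast
    show "domZ \<subseteq> ?D'" by (force intro: exI[of _ 0])
    show "\<forall>h\<in>domZ. Z' h = Z h" using Z'(2)[of _ 0] by simp
    show "accretive_Z pair ?D' Z'"
      unfolding accretive_Z_def using ext Z'(2) unfolding accretive_extension_def by auto
  qed (rule Z'(1))
  moreover have "h0 \<in> ?D'" using csubspace_0[OF domZ_subspace] by (force intro: exI[of _ 1] simp: scaleC_one)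
  ultimately show False using \<open>h0 \<notin> domZ\<close> by simp
qed

end

context duality_iso
begin

lemma ctends_of_Vs_tends:
  assumes g: "\<And>n. g n \<in> Hpm" and k: "k \<in> Hpm" and lim: "ctends ipH (\<lambda>n. Vs (g n)) (Vs k)"
  shows "ctends ipPM g k"
proof -
  obtain c where c: "c > 0" "\<And>g. g \<in> Hpm \<Longrightarrow> c * PM.nrm g \<le> HH.nrm (Vs g)"
    using Vs_bounded_below by blast
  show ?thesis
  proof (rule PM.ctends_bound[OF g k])
    show "PM.nrm (g n - k) \<le> 1 / c * HH.nrm (Vs (g n) - Vs k)" for n
      using c(2)[OF PM.mem_diff[OF g k]] Vs_diff[OF g k] c(1) by (simp add: field_simps mult.commute)
    show "(\<lambda>n. 1 / c * HH.nrm (Vs (g n) - Vs k)) \<longlonglongrightarrow> 0"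
      using lim tendsto_mult_right_zero unfolding HH.ctends_iff by blast
  qed
qed

end

locale reduced_operator = duality_operator + duality_iso
begin

definition domT where "domT = {f \<in> H. V f \<in> domZ}"
definition T where "T f = Vs (Z (V f))"

lemma domT_subset: "domT \<subseteq> H" unfolding domT_def by blast

lemma Vi_mem_domT: "h \<in> domZ \<Longrightarrow> Vi h \<in> domT"
  unfolding domT_def using Vi_mem V_Vi domZ_mem by simp

lemma T_linear: "linear_on domT H T"
  unfolding linear_on_def domT_def T_def
  using HH.subspace V_linear Z Vs_linear linear_on_0[OF V_linear]
  by (auto simp: linear_on_def csubspace_def)

lemma ip_T: "f \<in> domT \<Longrightarrow> ipH f (T f) = pair (V f) (Z (V f))"
  unfolding domT_def T_def using pair_V_eq_ip_Vs Z_mem by simp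

lemma Re_ip_T: "f \<in> domT \<Longrightarrow> Re (ipH (T f) f) = Re (pair (V f) (Z (V f)))"
  using ip_T[of f] HH.conj_sym[of f "T f"] linear_onD(2)[OF T_linear, of f] domT_subset by auto

lemma T_closed:
  assumes closed: "closed_op Hmp ipMP Hpm ipPM domZ Z"
  shows "closed_op H ipH H ipH domT T"
  unfolding closed_op_def
proof (intro allI impI; elim conjE)
  fix f x t assume f: "\<forall>n. f n \<in> domT" and x: "x \<in> H" and t: "t \<in> H"
    and fx: "ctends ipH f x" and ft: "ctends ipH (\<lambda>n. T (f n)) t"
  have fH: "\<And>n. f n \<in> H" and VfZ: "\<And>n. V (f n) \<in> domZ" using f unfolding domT_def by auto
  obtain k where k: "k \<in> Hpm" "t = Vs k" using Vs_surj t by (metis imageE)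
  have "ctends ipPM (\<lambda>n. Z (V (f n))) k"
    using ctends_of_Vs_tends[OF Z_mem[OF VfZ] k(1)] ft k(2) unfolding T_def by simp
  then have "V x \<in> domZ \<and> Z (V x) = k"
    using closed_opD[OF closed VfZ V_mem[OF x] k(1) V_tends[OF fH x fx]] by simp
  then show "x \<in> domT \<and> T x = t" using x k(2) unfolding domT_def T_def by simp
qed

end

lemma Re_accretive_witness:
  fixes A p c z :: complex and r :: real
  shows "Re (A + cnj (c * (\<i> * cnj z)) * p + c * cnj (\<i> * z * p) + c * cnj (c * (\<i> * cnj z)) * r)
    = Re A + ((Re c)\<^sup>2 + (Im c)\<^sup>2) * (r * Im z)"
  by (simp add: algebra_simps power2_eq_square)

context reduced_operator
begin

lemma accretive_T: "accretive_Z pair domZ Z \<Longrightarrow> f \<in> domT \<Longrightarrow> Re (ipH (T f) f) \<ge> 0"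
  using Re_ip_T unfolding accretive_Z_def domT_def by auto

lemma Im_ip_minus_i_T: "f \<in> domT \<Longrightarrow> Im (ipH ((- \<i>) *\<^sub>C T f) f) = - Re (ipH (T f) f)"
  using HH.scale_left linear_onD(2)[OF T_linear] domT_subset by auto

text \<open>Here \<open>u = Vs k\<close> is an eigenvector of the adjoint of \<open>T\<close> for the eigenvalue \<open>-\<i> cnj z\<close>.\<close>
lemma accretive_extension_of_T_adjoint_eigenvector:
  assumes acc: "accretive_Z pair domZ Z" and z: "Im z > 0" and k: "k \<in> Hpm"
    and eigen: "\<And>f. f \<in> domT \<Longrightarrow> ipH (T f) (Vs k) = \<i> * z * ipH f (Vs k)"
  shows "accretive_extension pair domZ Z (V (Vs k)) ((\<i> * cnj z) *\<^sub>C k)"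
proof (rule accretive_extensionI)
  fix h c assume h: "h \<in> domZ"
  define u where "u = Vs k"
  have u: "u \<in> H" unfolding u_def by (rule Vs_mem[OF k])
  define f where "f = Vi h"
  have fT: "f \<in> domT" and fH: "f \<in> H" and Vf: "V f = h" and TfH: "T f \<in> H"
    unfolding f_def using Vi_mem_domT[OF h] domT_subset V_Vi[OF domZ_mem[OF h]] linear_onD(2)[OF T_linear]
    by auto
  define a where "a = \<i> * cnj z"
  have "Vs (Z h + c *\<^sub>C (a *\<^sub>C k)) = T f + (c * a) *\<^sub>C u"
    using linear_onD(3,4)[OF Vs_linear] Z_mem[OF h] PM.mem_scale k Vf
    by (simp add: T_def u_def scaleC_scaleC)
  then have "pair (h + c *\<^sub>C V u) (Z h + c *\<^sub>C (a *\<^sub>C k)) = ipH (f + c *\<^sub>C u) (T f + (c * a) *\<^sub>C u)"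
    using pair_V_eq_ip_Vs[OF _ HH.mem_add[OF fH HH.mem_scale[OF u]]] V_add[OF fH HH.mem_scale[OF u]]
      V_scale[OF u] Vf Z_mem[OF h] PM.mem_add PM.mem_scale k by simp
  also have "\<dots> = ipH f (T f) + cnj (c * a) * ipH f u + c * cnj (\<i> * z * ipH f u)
      + c * cnj (c * a) * complex_of_real ((HH.nrm u)\<^sup>2)"
    using HH.add_scale_expand[OF fH u TfH] HH.conj_sym[OF TfH u] eigen[OF fT]
      HH.self_eq_nrm_sq[OF u] by (simp add: u_def)
  finally have "Re (pair (h + c *\<^sub>C V u) (Z h + c *\<^sub>C (a *\<^sub>C k)))
      = Re (ipH f (T f)) + ((Re c)\<^sup>2 + (Im c)\<^sup>2) * ((HH.nrm u)\<^sup>2 * Im z)"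
    unfolding a_def by (simp only: Re_accretive_witness)
  moreover have "Re (ipH f (T f)) \<ge> 0"
    using accretive_T[OF acc fT] HH.conj_sym[OF fH TfH] by simp
  ultimately show "0 \<le> Re (pair (h + c *\<^sub>C V (Vs k)) (Z h + c *\<^sub>C ((\<i> * cnj z) *\<^sub>C k)))"
    using z unfolding a_def u_def by simp
qed

lemma orthogonal_to_range_mem_domT:
  assumes max: "max_accretive_Z Hmp Hpm pair domZ Z" and z: "Im z > 0" and u: "u \<in> H"
    and orth: "\<forall>f\<in>domT. ipH ((- \<i>) *\<^sub>C T f - z *\<^sub>C f) u = 0"
  shows "u \<in> domT"
proof -
  have acc: "accretive_Z pair domZ Z" using max unfolding max_accretive_Z_def by blast
  obtain k where k: "k \<in> Hpm" "Vs k = u" using Vs_surj u by (metis imageE)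
  have "ipH (T f) (Vs k) = \<i> * z * ipH f (Vs k)" if f: "f \<in> domT" for f
  proof -
    have fH: "f \<in> H" and TfH: "T f \<in> H" using f domT_subset linear_onD(2)[OF T_linear] by auto
    have "ipH ((- \<i>) *\<^sub>C T f - z *\<^sub>C f) u = (- \<i>) * ipH (T f) u - z * ipH f u"
      using HH.diff_left[OF HH.mem_scale[OF TfH] HH.mem_scale[OF fH] u]
        HH.scale_left[OF TfH u] HH.scale_left[OF fH u] by simp
    then have "\<i> * ((- \<i>) * ipH (T f) u) = \<i> * (z * ipH f u)" using orth f by simp
    then show ?thesis using k(2) by (simp add: mult.assoc)
  qed
  then have "V u \<in> domZ"
    using max_accretive_mem_dom[OF max V_mem[OF u] PM.mem_scale[OF k(1)]]
      accretive_extension_of_T_adjoint_eigenvector[OF acc z k(1)] k(2) by blast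
  then show ?thesis unfolding domT_def using u by simp
qed

lemma m_accretive_T:
  assumes max: "max_accretive_Z Hmp Hpm pair domZ Z" and closed: "closed_op Hmp ipMP Hpm ipPM domZ Z"
  shows "m_accretive H ipH domT T"
  unfolding m_accretive_def
proof (rule HH.m_dissipativeI_closed[OF domT_subset linear_on_scaleC[OF T_linear HH.subspace]])
  have acc: "accretive_Z pair domZ Z" using max unfolding max_accretive_Z_def by blast
  show diss: "Im (ipH ((- \<i>) *\<^sub>C T f) f) \<le> 0" if "f \<in> domT" for f
    using Im_ip_minus_i_T[OF that] accretive_T[OF acc that] by simp
  show "closed_op H ipH H ipH domT (\<lambda>f. (- \<i>) *\<^sub>C T f)"
    unfolding closed_op_def
  proof (intro allI impI; elim conjE)
    fix f x t assume f: "\<forall>n. f n \<in> domT" and x: "x \<in> H" and t: "t \<in> H"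
      and fx: "ctends ipH f x" and ft: "ctends ipH (\<lambda>n. (- \<i>) *\<^sub>C T (f n)) t"
    have "ctends ipH (\<lambda>n. \<i> *\<^sub>C ((- \<i>) *\<^sub>C T (f n))) (\<i> *\<^sub>C t)"
      using HH.ctends_scale[OF _ t ft] HH.mem_scale linear_onD(2)[OF T_linear] f by blast
    then have "ctends ipH (\<lambda>n. T (f n)) (\<i> *\<^sub>C t)" by (simp add: scaleC_scaleC scaleC_one)
    then have "x \<in> domT \<and> T x = \<i> *\<^sub>C t"
      using closed_opD[OF T_closed[OF closed] _ x HH.mem_scale[OF t] fx] f by blast
    then show "x \<in> domT \<and> (- \<i>) *\<^sub>C T x = t" by (simp add: scaleC_scaleC scaleC_one)
  qed
  fix z u assume z: "Im z > 0" and u: "u \<in> H" and orth: "\<forall>f\<in>domT. ipH ((- \<i>) *\<^sub>C T f - z *\<^sub>C f) u = 0"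
  have uT: "u \<in> domT" by (rule orthogonal_to_range_mem_domT[OF max z u orth])
  have "Im (ipH ((- \<i>) *\<^sub>C T u - z *\<^sub>C u) u) = - Re (ipH (T u) u) - Im z * (HH.nrm u)\<^sup>2"
    using Im_ip_minus_i_T[OF uT] HH.diff_left[OF HH.mem_scale[OF linear_onD(2)[OF T_linear uT]] HH.mem_scale[OF u] u]
      HH.scale_left[OF u u] HH.self_eq_nrm_sq[OF u] by simp
  then have "Im z * (HH.nrm u)\<^sup>2 \<le> 0" using orth uT accretive_T[OF acc uT] by simp
  then show "u = 0" using z HH.nrm_sq_le_0D[OF u] by (simp add: mult_le_0_iff)
qed

end

context reduced_operator
begin

lemma graph_mem_if_m_accretive_T:
  assumes m: "m_accretive H ipH domT T" and h0: "h0 \<in> Hmp" and k0: "k0 \<in> Hpm"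
    and ext: "accretive_extension pair domZ Z h0 k0"
  shows "h0 \<in> domZ \<and> Z h0 = k0"
proof -
  define f0 where "f0 = Vi h0"
  have f0H: "f0 \<in> H" and Vf0: "V f0 = h0" unfolding f0_def using Vi_mem[OF h0] V_Vi[OF h0] by auto
  text \<open>Solve \<open>T g + g = Vs k0 + f0\<close> with the resolvent of \<open>-\<i> T\<close> at \<open>\<i>\<close>.\<close>
  have "(\<lambda>f. (- \<i>) *\<^sub>C T f - \<i> *\<^sub>C f) ` domT = H"
    using m unfolding m_accretive_def m_dissipative_def bij_betw_def by simp
  moreover have "(- \<i>) *\<^sub>C (Vs k0 + f0) \<in> H" using Vs_mem[OF k0] f0H HH.mem_add HH.mem_scale by simp
  ultimately obtain g where g: "g \<in> domT" "(- \<i>) *\<^sub>C T g - \<i> *\<^sub>C g = (- \<i>) *\<^sub>C (Vs k0 + f0)"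
    by (metis (no_types, lifting) imageE)
  have gH: "g \<in> H" and Vg: "V g \<in> domZ" using g(1) unfolding domT_def by auto
  have "\<i> *\<^sub>C ((- \<i>) *\<^sub>C T g - \<i> *\<^sub>C g) = \<i> *\<^sub>C ((- \<i>) *\<^sub>C (Vs k0 + f0))" using g(2) by simp
  then have "T g + g = Vs k0 + f0" by (simp add: scaleC_diff_right scaleC_scaleC scaleC_one scaleC_minus1)
  then have "Vs k0 = T g + g - f0" by (simp add: algebra_simps)
  then have Vs_diff_eq: "Vs (k0 - Z (V g)) = - (f0 - g)"
    using Vs_diff[OF k0 Z_mem[OF Vg]] unfolding T_def by simp
  define e where "e = f0 - g"
  have eH: "e \<in> H" unfolding e_def using HH.mem_diff f0H gH by simp
  have "- V g + 1 *\<^sub>C h0 = V e" and "Z (- V g) + 1 *\<^sub>C k0 = k0 - Z (V g)"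
    unfolding e_def using V_diff[OF f0H gH] Vf0 linear_on_minus[OF Z Vg] by (simp_all add: scaleC_one)
  then have "Re (pair (V e) (k0 - Z (V g))) \<ge> 0"
    using ext csubspace_minus[OF domZ_subspace Vg] unfolding accretive_extension_def by metis
  moreover have "pair (V e) (k0 - Z (V g)) = - complex_of_real ((HH.nrm e)\<^sup>2)"
    using pair_V_eq_ip_Vs[OF PM.mem_diff[OF k0 Z_mem[OF Vg]] eH] Vs_diff_eq HH.minus_right[OF eH eH]
      HH.self_eq_nrm_sq[OF eH] unfolding e_def by simp
  ultimately have "e = 0" using HH.nrm_sq_le_0D[OF eH] by simp
  then have "f0 = g" unfolding e_def by simp
  then have h0Z: "h0 \<in> domZ" using Vf0 Vg by simp
  have "Vs k0 = Vs (Z h0)" using \<open>T g + g = Vs k0 + f0\<close> \<open>f0 = g\<close> Vf0 unfolding T_def by simp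
  then show ?thesis using Vs_inj[OF k0 Z_mem[OF h0Z]] h0Z by simp
qed

lemma maximal_accretive_graph_if_m_accretive_T:
  assumes m: "m_accretive H ipH domT T"
  shows "maximal_accretive_graph Hmp Hpm pair domZ Z"
proof -
  have "accretive_Z pair domZ Z" unfolding accretive_Z_def
  proof
    fix h assume h: "h \<in> domZ"
    have TH: "(- \<i>) *\<^sub>C T (Vi h) \<in> H"
      using HH.mem_scale linear_onD(2)[OF T_linear Vi_mem_domT[OF h]] by blast
    have "Im (ipH ((- \<i>) *\<^sub>C T (Vi h)) (Vi h)) \<le> 0"
      using HH.m_dissipative_Im_le_0[OF m[unfolded m_accretive_def] Vi_mem_domT[OF h] TH] .
    then show "0 \<le> Re (cnj (pair h (Z h)))"
      using Im_ip_minus_i_T[OF Vi_mem_domT[OF h]] Re_ip_T[OF Vi_mem_domT[OF h]] V_Vi[OF domZ_mem[OF h]] by simp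
  qed
  then show ?thesis
    unfolding maximal_accretive_graph_def using graph_mem_if_m_accretive_T[OF m] by blast
qed

end

section \<open>The weighted space \<open>\<X>\<^sup>2\<^sup>,\<^sup>S\<close>\<close>

locale weighted_space =
  fixes ipX :: "'x::cvec \<Rightarrow> 'x \<Rightarrow> complex" and S :: "'x \<times> 'x \<Rightarrow> 'x \<times> 'x"
  assumes X: "hilbert_on UNIV ipX" and S: "bounded_unif_pos_sa ipX S"
begin

sublocale XX: hilbert_space "UNIV :: 'x set" ipX using X by (rule hilbert_space_of_hilbert_on)

lemma ip2_inner_product: "inner_product_on UNIV (ip2 ipX)"
  unfolding inner_product_on_def
proof (intro conjI ballI allI impI csubspace_UNIV)
  fix x y z :: "'x \<times> 'x" and c :: complex
  show "ip2 ipX (x + y) z = ip2 ipX x z + ip2 ipX y z"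
    unfolding ip2_def using XX.add_left[of "fst x" "fst y" "fst z"] XX.add_left[of "snd x" "snd y" "snd z"] by simp
  show "ip2 ipX (c *\<^sub>C x) y = c * ip2 ipX x y"
    unfolding ip2_def using XX.scale_left[of "fst x" "fst y" c] XX.scale_left[of "snd x" "snd y" c]
    by (simp add: distrib_left)
  show "ip2 ipX y x = cnj (ip2 ipX x y)"
    unfolding ip2_def using XX.conj_sym[of "fst x" "fst y"] XX.conj_sym[of "snd x" "snd y"] by simp
next
  fix x :: "'x \<times> 'x"
  show "0 \<le> Re (ip2 ipX x x)" unfolding ip2_def using XX.Re_self_nonneg by simp
  assume "ip2 ipX x x = 0"
  then have "(XX.nrm (fst x))\<^sup>2 + (XX.nrm (snd x))\<^sup>2 = 0"
    unfolding ip2_def using XX.nrm_sq by (metis UNIV_I plus_complex.sel(1) zero_complex.sel(1))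
  then show "x = 0" using XX.nrm_sq_le_0D by (simp add: prod_eq_iff add_nonneg_eq_0_iff)
qed

sublocale X2: inner_space "UNIV :: ('x \<times> 'x) set" "ip2 ipX" by (rule inner_space.intro[OF ip2_inner_product])

lemma X2_nrm_sq: "(X2.nrm p)\<^sup>2 = (XX.nrm (fst p))\<^sup>2 + (XX.nrm (snd p))\<^sup>2"
  using X2.nrm_sq[of p] XX.nrm_sq[of "fst p"] XX.nrm_sq[of "snd p"] by (simp add: ip2_def)

lemma X2_nrm_bounds: "XX.nrm (fst p) \<le> X2.nrm p" "XX.nrm (snd p) \<le> X2.nrm p"
  "X2.nrm p \<le> XX.nrm (fst p) + XX.nrm (snd p)"
  using X2_nrm_sq[of p] XX.nrm_nonneg[of "fst p"] XX.nrm_nonneg[of "snd p"] X2.nrm_nonneg[of p]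
  by (smt (verit, best) UNIV_I power2_le_imp_le zero_le_power2 power2_sum mult_nonneg_nonneg)+

lemma X2_complete: assumes c: "ccauchy (ip2 ipX) f" shows "\<exists>x. ctends (ip2 ipX) f x"
proof -
  have "ccauchy ipX (\<lambda>n. fst (f n))" "ccauchy ipX (\<lambda>n. snd (f n))"
    using c X2_nrm_bounds(1,2)[of "f _ - f _"] unfolding X2.ccauchy_iff XX.ccauchy_iff
    by (smt (verit) fst_diff snd_diff)+
  then obtain a b where a: "ctends ipX (\<lambda>n. fst (f n)) a" and b: "ctends ipX (\<lambda>n. snd (f n)) b"
    using XX.complete by blast
  have "ctends (ip2 ipX) f (a, b)"
  proof (rule X2.ctends_bound)
    show "X2.nrm (f n - (a, b)) \<le> XX.nrm (fst (f n) - a) + XX.nrm (snd (f n) - b)" for n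
      using X2_nrm_bounds(3)[of "f n - (a, b)"] by simp
    show "(\<lambda>n. XX.nrm (fst (f n) - a) + XX.nrm (snd (f n) - b)) \<longlonglongrightarrow> 0"
      using a b tendsto_add unfolding XX.ctends_iff by fastforce
  qed auto
  then show ?thesis by blast
qed

lemma S_linear: "linear_on UNIV UNIV S"
  and S_sym: "ip2 ipX (S p) q = ip2 ipX p (S q)"
  using S unfolding bounded_unif_pos_sa_def by blast+

lemma S_add: "S (p + q) = S p + S q" using linear_onD(3)[OF S_linear] by simp
lemma S_scale: "S (c *\<^sub>C p) = c *\<^sub>C S p" using linear_onD(4)[OF S_linear] by simp
lemma S_diff: "S (p - q) = S p - S q" using linear_on_diff[OF S_linear] by simp

lemma S_coercive: "\<exists>c>0. \<forall>p. c * (X2.nrm p)\<^sup>2 \<le> Re (ip2 ipX (S p) p)"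
  using S unfolding bounded_unif_pos_sa_def X2.nrm_def by blast

lemma S_bounded: "\<exists>C. \<forall>p. Re (ip2 ipX (S p) p) \<le> C * (X2.nrm p)\<^sup>2"
proof -
  obtain C where C: "\<And>p. X2.nrm (S p) \<le> C * X2.nrm p"
    using S unfolding bounded_unif_pos_sa_def bounded_on_def X2.nrm_def by blast
  have "Re (ip2 ipX (S p) p) \<le> C * (X2.nrm p)\<^sup>2" for p
  proof -
    have "Re (ip2 ipX (S p) p) \<le> X2.nrm (S p) * X2.nrm p" by (rule X2.Re_le_nrm_mult) auto
    also have "\<dots> \<le> C * X2.nrm p * X2.nrm p"
      using C[of p] X2.nrm_nonneg[OF UNIV_I, of p] by (rule mult_right_mono)
    finally show ?thesis by (simp add: power2_eq_square mult.assoc)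
  qed
  then show ?thesis by blast
qed

lemma ipS_inner_product: "inner_product_on UNIV (ipS ipX S)"
  unfolding inner_product_on_def ipS_def
proof (intro conjI ballI allI impI csubspace_UNIV)
  fix x y z :: "'x \<times> 'x" and c :: complex
  show "ip2 ipX (S (x + y)) z = ip2 ipX (S x) z + ip2 ipX (S y) z" unfolding S_add by (rule X2.add_left) auto
  show "ip2 ipX (S (c *\<^sub>C x)) y = c * ip2 ipX (S x) y" unfolding S_scale by (rule X2.scale_left) auto
  show "ip2 ipX (S y) x = cnj (ip2 ipX (S x) y)" using S_sym[of y x] X2.conj_sym[of "S x" y] by simp
next
  fix x :: "'x \<times> 'x"
  obtain c where c: "c > 0" "\<And>p. c * (X2.nrm p)\<^sup>2 \<le> Re (ip2 ipX (S p) p)" using S_coercive by blast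
  show "0 \<le> Re (ip2 ipX (S x) x)" using c(1) c(2)[of x] by (smt (verit) zero_le_mult_iff zero_le_power2)
  assume "ip2 ipX (S x) x = 0"
  then show "x = 0" using c(1) c(2)[of x] X2.nrm_sq_le_0D by (simp add: mult_le_0_iff)
qed

sublocale XSi: inner_space "UNIV :: ('x \<times> 'x) set" "ipS ipX S" by (rule inner_space.intro[OF ipS_inner_product])

lemma XS_nrm_sq: "(XSi.nrm p)\<^sup>2 = Re (ip2 ipX (S p) p)"
  using XSi.nrm_sq[of p] unfolding ipS_def by simp

lemma XS_nrm_lower: "\<exists>c>0. \<forall>p. c * X2.nrm p \<le> XSi.nrm p"
proof -
  obtain c where c: "c > 0" "\<And>p. c * (X2.nrm p)\<^sup>2 \<le> Re (ip2 ipX (S p) p)" using S_coercive by blast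
  have "sqrt c * X2.nrm p \<le> XSi.nrm p" for p
  proof -
    have "(sqrt c * X2.nrm p)\<^sup>2 \<le> (XSi.nrm p)\<^sup>2"
      using c(2)[of p] XS_nrm_sq[of p] c(1) by (simp add: power_mult_distrib)
    then show ?thesis by (rule power2_le_imp_le[OF _ XSi.nrm_nonneg[OF UNIV_I]])
  qed
  then show ?thesis using c(1) by (intro exI[of _ "sqrt c"]) auto
qed

lemma XS_nrm_upper: "\<exists>C. \<forall>p. XSi.nrm p \<le> C * X2.nrm p"
proof -
  obtain C where C: "\<And>p. Re (ip2 ipX (S p) p) \<le> C * (X2.nrm p)\<^sup>2" using S_bounded by blast
  have "XSi.nrm p \<le> sqrt \<bar>C\<bar> * X2.nrm p" for p
  proof -
    have "C * (X2.nrm p)\<^sup>2 \<le> \<bar>C\<bar> * (X2.nrm p)\<^sup>2" by (rule mult_right_mono) auto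
    then have "(XSi.nrm p)\<^sup>2 \<le> (sqrt \<bar>C\<bar> * X2.nrm p)\<^sup>2"
      using C[of p] XS_nrm_sq[of p] by (simp add: power_mult_distrib)
    then show ?thesis by (rule power2_le_imp_le) (use X2.nrm_nonneg[OF UNIV_I, of p] in simp)
  qed
  then show ?thesis by blast
qed

lemma XS_complete: assumes "ccauchy (ipS ipX S) f" shows "\<exists>x. ctends (ipS ipX S) f x"
proof -
  obtain c where c: "c > 0" "\<And>p. c * X2.nrm p \<le> XSi.nrm p" using XS_nrm_lower by blast
  obtain C where C: "\<And>p. XSi.nrm p \<le> C * X2.nrm p" using XS_nrm_upper by blast
  have "ccauchy (ip2 ipX) f"
    by (rule X2.ccauchy_of_lower_bound[where L = id and nrm' = XSi.nrm and c = c])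
      (use assms c in \<open>auto simp: XSi.ccauchy_iff\<close>)
  then obtain x where x: "ctends (ip2 ipX) f x" using X2_complete by blast
  have "ctends (ipS ipX S) f x"
  proof (rule XSi.ctends_bound)
    show "XSi.nrm (f n - x) \<le> C * X2.nrm (f n - x)" for n by (rule C)
    show "(\<lambda>n. C * X2.nrm (f n - x)) \<longlonglongrightarrow> 0"
      using tendsto_mult_right_zero x X2.ctends_iff by blast
  qed auto
  then show ?thesis by blast
qed

sublocale XS: hilbert_space "UNIV :: ('x \<times> 'x) set" "ipS ipX S"
  by (rule hilbert_space.intro[OF XSi.inner_space_axioms]) (unfold_locales, use XS_complete in blast)

text \<open>Surjectivity of \<open>S\<close> is the Riesz representation of \<open>p \<mapsto> ip2 p q\<close> in \<open>\<X>\<^sup>2\<^sup>,\<^sup>S\<close>.\<close>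
lemma S_inv_right: "S (inv S q) = q"
proof -
  obtain c where c: "c > 0" "\<And>p. c * X2.nrm p \<le> XSi.nrm p" using XS_nrm_lower by blast
  have "\<exists>y\<in>UNIV. \<forall>p\<in>UNIV. ip2 ipX p q = ipS ipX S p y"
  proof (rule XS.riesz_representation)
    show "cmod (ip2 ipX p q) \<le> (X2.nrm q / c) * XSi.nrm p" for p
    proof -
      have p: "X2.nrm p \<le> XSi.nrm p / c" using c by (simp add: field_simps mult.commute)
      have "cmod (ip2 ipX p q) \<le> X2.nrm p * X2.nrm q" by (rule X2.cauchy_schwarz) auto
      also have "\<dots> \<le> (XSi.nrm p / c) * X2.nrm q" by (rule mult_right_mono[OF p X2.nrm_nonneg[OF UNIV_I]])
      also have "\<dots> = (X2.nrm q / c) * XSi.nrm p" by (simp add: mult.commute)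
      finally show ?thesis .
    qed
  qed (auto simp: X2.add_left X2.scale_left)
  then obtain y where y: "\<forall>p. ip2 ipX p q = ip2 ipX (S p) y" unfolding ipS_def by blast
  have "S y = q" by (rule X2.eq_if_ip_right_eq) (use y S_sym in auto)
  then show ?thesis by (metis f_inv_into_f rangeI)
qed

lemma S_inj: assumes "S p = S q" shows "p = q"
proof -
  have "ipS ipX S (p - q) (p - q) = 0" unfolding ipS_def S_diff assms by simp
  then have "p - q = 0" using XSi.self_eq_0D by blast
  then show "p = q" by simp
qed

end

section \<open>The adjoint of a densely defined symmetric operator\<close>

context inner_space
begin

lemma eq_0_if_orthogonal_to_dense:
  assumes dense: "dense_in ip V D" and d: "d \<in> V" and orth: "\<And>f. f \<in> D \<Longrightarrow> ip f d = 0"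
  shows "d = 0"
proof -
  have "nrm d \<le> 0 + e" if e: "e > 0" for e
  proof (cases "nrm d = 0")
    case False
    then have pos: "nrm d > 0" using nrm_nonneg[OF d] by simp
    have "\<forall>x\<in>V. \<forall>e>0. \<exists>f\<in>D. nrm (x - f) < e" using dense unfolding dense_in_def nrm_def by simp
    then obtain f where f: "f \<in> D" "nrm (d - f) < e" using d e by blast
    have fV: "f \<in> V" using f(1) dense unfolding dense_in_def by blast
    have "(nrm d)\<^sup>2 = Re (ip (d - f) d)"
      using nrm_sq[OF d] diff_left[OF d fV d] orth[OF f(1)] by simp
    also have "\<dots> \<le> nrm (d - f) * nrm d" by (rule Re_le_nrm_mult[OF mem_diff[OF d fV] d])
    also have "\<dots> \<le> e * nrm d" using f(2) pos by simp
    finally show ?thesis using pos by (simp add: power2_eq_square)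
  qed (use e in simp)
  then have "nrm d \<le> 0" by (rule field_le_epsilon)
  then show ?thesis using nrm_eq_0[OF d] nrm_nonneg[OF d] by simp
qed

end

locale symmetric_operator =
  fixes ipX :: "'x::cvec \<Rightarrow> 'x \<Rightarrow> complex" and domA :: "'x set" and A :: "'x \<Rightarrow> 'x"
  assumes X: "hilbert_on UNIV ipX" and A: "closed_dd_symmetric ipX domA A"
begin

sublocale XX: hilbert_space "UNIV :: 'x set" ipX using X by (rule hilbert_space_of_hilbert_on)

abbreviation "domAs \<equiv> adj_dom ipX domA A"
abbreviation "As \<equiv> adj ipX domA A"

lemma A_linear: "linear_on domA UNIV A" and A_dense: "dense_in ipX UNIV domA"
  and A_symmetric: "f \<in> domA \<Longrightarrow> g \<in> domA \<Longrightarrow> ipX (A f) g = ipX f (A g)"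
  using A unfolding closed_dd_symmetric_def by blast+

lemma adjI:
  assumes "\<And>f. f \<in> domA \<Longrightarrow> ipX (A f) g = ipX f h" shows "g \<in> domAs" "As g = h"
proof -
  show "g \<in> domAs" unfolding adj_dom_def using assms by blast
  show "As g = h" unfolding adj_def
  proof (rule the_equality)
    show "\<forall>f\<in>domA. ipX (A f) g = ipX f h" using assms by blast
    show "h' = h" if "\<forall>f\<in>domA. ipX (A f) g = ipX f h'" for h'
      using XX.eq_0_if_orthogonal_to_dense[OF A_dense XX.mem_diff[of h' h]] that assms XX.diff_right
      by simp
  qed
qed

lemma adjD: "g \<in> domAs \<Longrightarrow> f \<in> domA \<Longrightarrow> ipX (A f) g = ipX f (As g)"
  unfolding adj_dom_def using adjI(2) by blast

lemma As_linear: "linear_on domAs UNIV As"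
  unfolding linear_on_def csubspace_def
proof (intro conjI ballI allI)
  show "0 \<in> domAs" using adjI(1)[of 0 0] by simp
  show "f + g \<in> domAs" "As (f + g) = As f + As g" if "f \<in> domAs" "g \<in> domAs" for f g
    using adjI[of "f + g" "As f + As g"] adjD that XX.add_right by simp_all
  show "c *\<^sub>C f \<in> domAs" "As (c *\<^sub>C f) = c *\<^sub>C As f" if "f \<in> domAs" for c f
    using adjI[of "c *\<^sub>C f" "c *\<^sub>C As f"] adjD that XX.scale_right by simp_all
qed simp

lemma domA_subset_domAs: "f \<in> domA \<Longrightarrow> f \<in> domAs" and As_eq_A: "f \<in> domA \<Longrightarrow> As f = A f"
  using adjI[of f "A f"] A_symmetric by auto

lemma As_0: "As 0 = 0" using linear_on_0[OF As_linear] .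

end

section \<open>The first-order system \<open>M\<close> with boundary condition \<open>Gr(-\<i>Z)\<close>\<close>

locale boundary_system =
  weighted_space ipX S + symmetric_operator ipX domA A +
  reduced_operator H Hmp Hpm ipH ipMP ipPM pair domZ Z V
  for ipX :: "'x::cvec \<Rightarrow> 'x \<Rightarrow> complex" and S domA A
    and H Hmp Hpm :: "'h::cvec set" and ipH ipMP ipPM pair domZ Z V +
  fixes G :: "'x \<Rightarrow> 'h" and W :: "'h \<Rightarrow> 'h"
  assumes red: "reduction_tuple ipX domA A H ipH Hmp ipMP Hpm ipPM pair G W"
begin

abbreviation "M \<equiv> Mstar ipX domA A S"
abbreviation "domM \<equiv> dom_MGr ipX domA A G W domZ Z"

lemma G_linear: "linear_on domAs Hmp G" and G_onto: "G ` domAs = Hmp"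
  and W_linear: "linear_on Hmp Hpm W" and W_onto: "W ` Hmp = Hpm"
  and green: "f \<in> domAs \<Longrightarrow> g \<in> domAs \<Longrightarrow> ipX (As f) g - ipX f (As g) = pair (G f) (W (G g))"
  using red unfolding reduction_tuple_def lin_homeo_def bij_betw_def by blast+

lemma G_mem: "f \<in> domAs \<Longrightarrow> G f \<in> Hmp" using linear_onD(2)[OF G_linear] .

lemma boundary_values_onto:
  assumes "h \<in> Hmp" "k \<in> Hpm" shows "\<exists>p\<in>domAs \<times> domAs. G (snd p) = h \<and> W (G (fst p)) = k"
proof -
  obtain a where a: "a \<in> Hmp" "W a = k" using W_onto assms(2) by (metis imageE)
  obtain p1 p2 where "p1 \<in> domAs" "G p1 = a" "p2 \<in> domAs" "G p2 = h"
    using G_onto a(1) assms(1) by (metis imageE)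
  then show ?thesis using a by (intro bexI[of _ "(p1, p2)"]) auto
qed

lemma G_domA: assumes f: "f \<in> domA" shows "G f = 0"
proof (rule pair_nondegenerate_left[OF G_mem[OF domA_subset_domAs[OF f]]])
  fix k assume "k \<in> Hpm"
  then obtain g where g: "g \<in> domAs" "W (G g) = k" using W_onto G_onto by (metis imageE)
  have "pair (G f) (W (G g)) = ipX (As f) g - ipX f (As g)"
    using green[OF domA_subset_domAs[OF f] g(1)] by simp
  also have "\<dots> = 0" using As_eq_A[OF f] adjD[OF g(1) f] by simp
  finally show "pair (G f) k = 0" using g(2) by simp
qed

lemma S_M: "S (M p) = (\<i> *\<^sub>C As (snd p), (- \<i>) *\<^sub>C As (fst p))"
  unfolding Mstar_def by (rule S_inv_right)

lemma M_linear: "linear_on (domAs \<times> domAs) UNIV M"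
  unfolding linear_on_def
proof (intro conjI ballI allI csubspace_Times linear_onD(1)[OF As_linear])
  show "M (p + q) = M p + M q" if "p \<in> domAs \<times> domAs" "q \<in> domAs \<times> domAs" for p q
    by (rule S_inj) (use that in \<open>auto simp: S_add S_M linear_onD(3)[OF As_linear] scaleC_add_right\<close>)
  show "M (c *\<^sub>C p) = c *\<^sub>C M p" if "p \<in> domAs \<times> domAs" for c p
    by (rule S_inj) (use that in \<open>auto simp: S_scale S_M linear_onD(4)[OF As_linear] scaleC_scaleC mult.commute\<close>)
qed simp

lemma Im_ipS_M:
  assumes p: "p \<in> domAs \<times> domAs"
  shows "Im (ipS ipX S (M p) p) = Re (pair (G (snd p)) (W (G (fst p))))"
proof -
  have "Im (ipS ipX S (M p) p) = Re (ipX (As (snd p)) (fst p)) - Re (ipX (As (fst p)) (snd p))"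
    unfolding ipS_def S_M ip2_def using XX.scale_left by simp
  also have "Re (ipX (As (fst p)) (snd p)) = Re (ipX (snd p) (As (fst p)))"
    using XX.conj_sym[of "As (fst p)" "snd p"] by simp
  finally show ?thesis using arg_cong[OF green[of "snd p" "fst p"], of Re] p by auto
qed

lemma M_symmetric_domA:
  assumes phi: "phi \<in> domA \<times> domA" and psi: "psi \<in> domAs \<times> domAs"
  shows "ipS ipX S (M phi) psi = ipS ipX S phi (M psi)"
proof -
  have "ipS ipX S (M phi) psi = \<i> * ipX (A (snd phi)) (fst psi) - \<i> * ipX (A (fst phi)) (snd psi)"
    unfolding ipS_def S_M ip2_def using As_eq_A phi XX.scale_left by auto
  also have "\<dots> = \<i> * ipX (snd phi) (As (fst psi)) - \<i> * ipX (fst phi) (As (snd psi))"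
    using adjD phi psi by auto
  also have "\<dots> = ip2 ipX phi (S (M psi))"
    unfolding S_M ip2_def using XX.scale_right by simp
  also have "\<dots> = ipS ipX S phi (M psi)" unfolding ipS_def by (rule S_sym[symmetric])
  finally show ?thesis .
qed

text \<open>\<open>M\<close> is the adjoint of its restriction to \<open>domA \<times> domA\<close>.\<close>
lemma M_adjoint:
  assumes h: "\<And>phi. phi \<in> domA \<times> domA \<Longrightarrow> ipS ipX S (M phi) psi = ipS ipX S phi eta"
  shows "psi \<in> domAs \<times> domAs" "M psi = eta"
proof -
  define s where "s = S eta"
  have e: "ipS ipX S phi eta = ipX (fst phi) (fst s) + ipX (snd phi) (snd s)" for phi
    using S_sym[of phi eta] unfolding ipS_def s_def ip2_def .
  have z: "0 \<in> domA" using csubspace_0[OF linear_onD(1)[OF A_linear]] .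
  have c1: "\<i> * ipX (A f) (fst psi) = ipX f (snd s)" if f: "f \<in> domA" for f
    using h[of "(0, f)"] f z e unfolding ipS_def S_M ip2_def using As_eq_A[OF f] As_0 XX.scale_left by simp
  have "ipX (A f) (fst psi) = ipX f (\<i> *\<^sub>C snd s)" if "f \<in> domA" for f
  proof -
    have "ipX (A f) (fst psi) = (- \<i>) * (\<i> * ipX (A f) (fst psi))" by (simp add: mult.assoc[symmetric])
    then show ?thesis using c1[OF that] XX.scale_right by simp
  qed
  then have p1: "fst psi \<in> domAs" "As (fst psi) = \<i> *\<^sub>C snd s" using adjI by blast+
  have c2: "(- \<i>) * ipX (A f) (snd psi) = ipX f (fst s)" if f: "f \<in> domA" for f
    using h[of "(f, 0)"] f z e unfolding ipS_def S_M ip2_def using As_eq_A[OF f] As_0 XX.scale_left by simp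
  have "ipX (A f) (snd psi) = ipX f ((- \<i>) *\<^sub>C fst s)" if "f \<in> domA" for f
  proof -
    have "ipX (A f) (snd psi) = \<i> * ((- \<i>) * ipX (A f) (snd psi))" by (simp add: mult.assoc[symmetric])
    also have "\<dots> = \<i> * ipX f (fst s)" using c2[OF that] by simp
    also have "\<dots> = ipX f ((- \<i>) *\<^sub>C fst s)" using XX.scale_right by simp
    finally show ?thesis .
  qed
  then have p2: "snd psi \<in> domAs" "As (snd psi) = (- \<i>) *\<^sub>C fst s" using adjI by blast+
  show "psi \<in> domAs \<times> domAs" using p1 p2 by (simp add: mem_Times_iff)
  have "S (M psi) = S eta" unfolding S_M p1(2) p2(2) s_def[symmetric]
    by (simp add: scaleC_scaleC scaleC_one prod_eq_iff)
  then show "M psi = eta" by (rule S_inj)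
qed

end

context boundary_system
begin

lemma domM_iff:
  "p \<in> domM \<longleftrightarrow> p \<in> domAs \<times> domAs \<and> G (snd p) \<in> domZ \<and> W (G (fst p)) = - Z (G (snd p))"
proof -
  have "\<i> *\<^sub>C a + \<i> *\<^sub>C b = 0 \<longleftrightarrow> b = - a" for a b :: 'h
    using scaleC_left_cancel[of \<i> "a + b" 0]
    by (auto simp: scaleC_add_right[symmetric] scaleC_minus_right eq_neg_iff_add_eq_0 add.commute)
  then show ?thesis unfolding dom_MGr_def by auto
qed

lemma domM_subset: "domM \<subseteq> domAs \<times> domAs" using domM_iff by blast

lemma domA_domA_subset_domM: "domA \<times> domA \<subseteq> domM"
  using domA_subset_domAs G_domA linear_on_0[OF W_linear] linear_on_0[OF Z] csubspace_0[OF domZ_subspace]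
  by (auto simp: domM_iff mem_Times_iff)

lemma boundary_values_domM:
  assumes h: "h \<in> domZ" shows "\<exists>p\<in>domM. G (snd p) = h"
proof -
  obtain p where p: "p \<in> domAs \<times> domAs" "G (snd p) = h" "W (G (fst p)) = - Z h"
    using boundary_values_onto[OF domZ_mem[OF h] PM.mem_minus[OF Z_mem[OF h]]] by blast
  then have "p \<in> domM" using h by (simp add: domM_iff)
  then show ?thesis using p(2) by blast
qed

lemma M_linear_domM: "linear_on domM UNIV M"
proof -
  note G = linear_onD(3,4)[OF G_linear] and W = linear_onD(3,4)[OF W_linear]
  have "csubspace domM" unfolding csubspace_def
  proof (intro conjI ballI allI)
    have "(0, 0) \<in> domM" using domA_domA_subset_domM csubspace_0[OF linear_onD(1)[OF A_linear]] by blast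
    then show "0 \<in> domM" by (simp add: zero_prod_def)
    show "p + q \<in> domM" if "p \<in> domM" "q \<in> domM" for p q
      using that csubspace_add[OF linear_onD(1)[OF As_linear]] csubspace_add[OF domZ_subspace]
        G W G_mem linear_onD(3)[OF Z] by (auto simp: domM_iff mem_Times_iff)
    show "c *\<^sub>C p \<in> domM" if "p \<in> domM" for c p
      using that csubspace_scale[OF linear_onD(1)[OF As_linear]] csubspace_scale[OF domZ_subspace]
        G W G_mem linear_onD(4)[OF Z] by (auto simp: domM_iff mem_Times_iff scaleC_minus_right)
  qed
  then show ?thesis using M_linear domM_subset unfolding linear_on_def by blast
qed

lemma Im_ipS_M_domM:
  assumes p: "p \<in> domM" shows "Im (ipS ipX S (M p) p) = - Re (pair (G (snd p)) (Z (G (snd p))))"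
  using Im_ipS_M domM_subset p pair_minus_right domM_iff domZ_mem Z_mem by (auto simp: domM_iff)

lemma m_dissipative_M_imp_accretive:
  assumes m: "m_dissipative UNIV (ipS ipX S) domM M" shows "accretive_Z pair domZ Z"
  unfolding accretive_Z_def
proof
  fix h assume h: "h \<in> domZ"
  obtain p where p: "p \<in> domM" "G (snd p) = h" using boundary_values_domM[OF h] by blast
  show "0 \<le> Re (cnj (pair h (Z h)))"
    using XSi.m_dissipative_Im_le_0[OF m p(1)] Im_ipS_M_domM[OF p(1)] p(2) by simp
qed

lemma graph_mem_if_m_dissipative_M:
  assumes m: "m_dissipative UNIV (ipS ipX S) domM M" and h0: "h0 \<in> Hmp" and k0: "k0 \<in> Hpm"
    and ext: "accretive_extension pair domZ Z h0 k0"
  shows "h0 \<in> domZ \<and> Z h0 = k0"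
proof -
  obtain psi where psi: "psi \<in> domAs \<times> domAs" "G (snd psi) = h0" "W (G (fst psi)) = - k0"
    using boundary_values_onto[OF h0 PM.mem_minus[OF k0]] by blast
  text \<open>Subtract the solution \<open>phi \<in> domM\<close> of \<open>(M - \<i>) phi = (M - \<i>) psi\<close>.\<close>
  have "(\<lambda>p. M p - \<i> *\<^sub>C p) ` domM = UNIV"
    using m unfolding m_dissipative_def bij_betw_def by simp
  then have "M psi - \<i> *\<^sub>C psi \<in> (\<lambda>p. M p - \<i> *\<^sub>C p) ` domM" by simp
  then obtain phi where phi: "phi \<in> domM" "M psi - \<i> *\<^sub>C psi = M phi - \<i> *\<^sub>C phi" by blast
  define h where "h = G (snd phi)"
  have phiA: "phi \<in> domAs \<times> domAs" and hZ: "h \<in> domZ" and Wphi: "W (G (fst phi)) = - Z h"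
    using phi(1) domM_iff h_def by auto
  define chi where "chi = psi - phi"
  have "M psi = M phi - \<i> *\<^sub>C phi + \<i> *\<^sub>C psi" using phi(2) by (simp add: algebra_simps)
  then have "M chi = \<i> *\<^sub>C chi"
    unfolding chi_def linear_on_diff[OF M_linear psi(1) phiA] by (simp add: scaleC_diff_right algebra_simps)
  then have "Im (ipS ipX S (M chi) chi) = (XSi.nrm chi)\<^sup>2"
    using XSi.scale_left[of chi chi \<i>] XSi.self_eq_nrm_sq[of chi] by simp
  moreover
  define a where "a = - h + 1 *\<^sub>C h0"
  define b where "b = Z (- h) + 1 *\<^sub>C k0"
  have mh: "- h \<in> domZ" using csubspace_minus[OF domZ_subspace hZ] .
  have a: "a \<in> Hmp" unfolding a_def by (rule MP.mem_add[OF domZ_mem[OF mh] MP.mem_scale[OF h0]])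
  have b: "b \<in> Hpm" unfolding b_def by (rule PM.mem_add[OF Z_mem[OF mh] PM.mem_scale[OF k0]])
  have "G (snd chi) = a" "W (G (fst chi)) = - b"
    using psi phiA Wphi linear_on_diff[OF G_linear] linear_on_diff[OF W_linear] G_mem linear_on_minus[OF Z hZ]
    by (auto simp: chi_def h_def a_def b_def scaleC_one mem_Times_iff)
  then have "Im (ipS ipX S (M chi) chi) = - Re (pair a b)"
    using Im_ipS_M[of chi] csubspace_diff[OF csubspace_Times[OF linear_onD(1)[OF As_linear]
          linear_onD(1)[OF As_linear]] psi(1) phiA] pair_minus_right[OF a b]
    by (simp add: chi_def)
  moreover have "0 \<le> Re (pair a b)"
    using ext mh unfolding accretive_extension_def a_def b_def by blast
  ultimately have "(XSi.nrm chi)\<^sup>2 \<le> 0" by linarith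
  then have "psi = phi" using XSi.nrm_sq_le_0D[of chi] by (simp add: chi_def)
  then show ?thesis using phi(1) psi by (auto simp: domM_iff)
qed

lemma maximal_accretive_graph_if_m_dissipative_M:
  "m_dissipative UNIV (ipS ipX S) domM M \<Longrightarrow> maximal_accretive_graph Hmp Hpm pair domZ Z"
  unfolding maximal_accretive_graph_def
  using m_dissipative_M_imp_accretive graph_mem_if_m_dissipative_M by blast

end

lemma Im_dissipative_witness:
  fixes A p c z :: complex and r :: real
  shows "Im (A + cnj c * (z * p) + c * cnj z * cnj p + c * cnj z * cnj c * r)
    = Im A - ((Re c)\<^sup>2 + (Im c)\<^sup>2) * (r * Im z)"
  by (simp add: algebra_simps power2_eq_square)

context boundary_system
begin

lemma dissipative_M: "accretive_Z pair domZ Z \<Longrightarrow> p \<in> domM \<Longrightarrow> Im (ipS ipX S (M p) p) \<le> 0"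
  using Im_ipS_M_domM domM_iff unfolding accretive_Z_def by fastforce

lemma domM_if_dissipative_extension:
  assumes max: "maximal_accretive_graph Hmp Hpm pair domZ Z" and psi: "psi \<in> domAs \<times> domAs"
    and diss: "\<And>phi c. phi \<in> domM \<Longrightarrow> Im (ipS ipX S (M (phi + c *\<^sub>C psi)) (phi + c *\<^sub>C psi)) \<le> 0"
  shows "psi \<in> domM"
proof -
  have dAs: "csubspace (domAs \<times> domAs)" using csubspace_Times linear_onD(1)[OF As_linear] by blast
  have Wpsi: "W (G (fst psi)) \<in> Hpm" using psi G_mem linear_onD(2)[OF W_linear] by auto
  have "accretive_extension pair domZ Z (G (snd psi)) (- W (G (fst psi)))"
  proof (rule accretive_extensionI)
    fix h c assume h: "h \<in> domZ"
    obtain phi where phi: "phi \<in> domM" "G (snd phi) = h" using boundary_values_domM[OF h] by blast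
    have phiA: "phi \<in> domAs \<times> domAs" using phi(1) domM_subset by blast
    define a where "a = h + c *\<^sub>C G (snd psi)"
    define b where "b = Z h + c *\<^sub>C - W (G (fst psi))"
    have a: "a \<in> Hmp" unfolding a_def using domZ_mem[OF h] G_mem psi MP.mem_add MP.mem_scale by auto
    have b: "b \<in> Hpm" unfolding b_def using Z_mem[OF h] Wpsi PM.mem_add PM.mem_scale PM.mem_minus by auto
    have "G (snd (phi + c *\<^sub>C psi)) = a" "W (G (fst (phi + c *\<^sub>C psi))) = - b"
      using phi phiA psi linear_onD(3,4)[OF G_linear] linear_onD(3,4)[OF W_linear] G_mem
        csubspace_scale[OF linear_onD(1)[OF As_linear]] MP.mem_scale
      by (auto simp: a_def b_def domM_iff mem_Times_iff scaleC_minus_right)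
    then have "Im (ipS ipX S (M (phi + c *\<^sub>C psi)) (phi + c *\<^sub>C psi)) = - Re (pair a b)"
      using Im_ipS_M[OF csubspace_add[OF dAs phiA csubspace_scale[OF dAs psi]]] pair_minus_right[OF a b] by simp
    then show "0 \<le> Re (pair (h + c *\<^sub>C G (snd psi)) (Z h + c *\<^sub>C - W (G (fst psi))))"
      using diss[OF phi(1), of c] unfolding a_def b_def by simp
  qed
  then show ?thesis
    using maximal_accretive_graphD[OF max] psi G_mem PM.mem_minus[OF Wpsi] by (auto simp: domM_iff)
qed

lemma M_closed:
  assumes max: "maximal_accretive_graph Hmp Hpm pair domZ Z"
  shows "closed_op UNIV (ipS ipX S) UNIV (ipS ipX S) domM M"
  unfolding closed_op_def
proof (intro allI impI; elim conjE)
  fix ps psi eta assume ps: "\<forall>n. ps n \<in> domM" and lim: "ctends (ipS ipX S) ps psi"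
    and Mlim: "ctends (ipS ipX S) (\<lambda>n. M (ps n)) eta"
  have acc: "accretive_Z pair domZ Z" using max unfolding maximal_accretive_graph_def by blast
  have psA: "\<And>n. ps n \<in> domAs \<times> domAs" using ps domM_subset by blast
  have "ipS ipX S (M phi) psi = ipS ipX S phi eta" if phi: "phi \<in> domA \<times> domA" for phi
  proof -
    have "(\<lambda>n. ipS ipX S (M phi) (ps n)) \<longlonglongrightarrow> ipS ipX S (M phi) psi"
      by (rule XSi.ctends_ip[OF _ _ _ _ XSi.ctends_const lim]) auto
    moreover have "(\<lambda>n. ipS ipX S phi (M (ps n))) \<longlonglongrightarrow> ipS ipX S phi eta"
      by (rule XSi.ctends_ip[OF _ _ _ _ XSi.ctends_const Mlim]) auto
    ultimately show ?thesis using M_symmetric_domA[OF phi psA] LIMSEQ_unique by simp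
  qed
  then have psiA: "psi \<in> domAs \<times> domAs" and Mpsi: "M psi = eta" using M_adjoint by blast+
  have "psi \<in> domM"
  proof (rule domM_if_dissipative_extension[OF max psiA])
    fix phi c assume phi: "phi \<in> domM"
    have phiA: "phi \<in> domAs \<times> domAs" using phi domM_subset by blast
    have "M (phi + c *\<^sub>C ps n) = M phi + c *\<^sub>C M (ps n)" for n
      using linear_onD(3,4)[OF M_linear_domM] phi ps linear_onD(1)[OF M_linear_domM] csubspace_scale by metis
    then have "(\<lambda>n. ipS ipX S (M (phi + c *\<^sub>C ps n)) (phi + c *\<^sub>C ps n))
        \<longlonglongrightarrow> ipS ipX S (M phi + c *\<^sub>C eta) (phi + c *\<^sub>C psi)"
      using XSi.ctends_ip[OF _ _ _ _ XSi.ctends_add[OF _ _ _ _ XSi.ctends_const XSi.ctends_scale[OF _ _ Mlim]]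
          XSi.ctends_add[OF _ _ _ _ XSi.ctends_const XSi.ctends_scale[OF _ _ lim]]] by simp
    moreover have "Im (ipS ipX S (M (phi + c *\<^sub>C ps n)) (phi + c *\<^sub>C ps n)) \<le> 0" for n
      using dissipative_M[OF acc] phi ps linear_onD(1)[OF M_linear_domM] csubspace_add csubspace_scale by metis
    moreover have "M (phi + c *\<^sub>C psi) = M phi + c *\<^sub>C eta"
      using linear_onD(3,4)[OF M_linear] phiA psiA Mpsi
        csubspace_scale[OF csubspace_Times[OF linear_onD(1)[OF As_linear] linear_onD(1)[OF As_linear]]]
      by metis
    ultimately show "Im (ipS ipX S (M (phi + c *\<^sub>C psi)) (phi + c *\<^sub>C psi)) \<le> 0"
      using LIMSEQ_le_const2[OF tendsto_Im] by fastforce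
  qed
  then show "psi \<in> domM \<and> M psi = eta" using Mpsi by blast
qed

end

context boundary_system
begin

lemma range_M_orthogonal_eq_0:
  assumes max: "maximal_accretive_graph Hmp Hpm pair domZ Z" and z: "Im z > 0"
    and orth: "\<forall>p\<in>domM. ipS ipX S (M p - z *\<^sub>C p) u = 0"
  shows "u = 0"
proof -
  have acc: "accretive_Z pair domZ Z" using max unfolding maximal_accretive_graph_def by blast
  have Mu: "ipS ipX S (M p) u = z * ipS ipX S p u" if p: "p \<in> domM" for p
    using orth p XSi.diff_left[of "M p" "z *\<^sub>C p" u] XSi.scale_left[of p u z] by simp
  have "ipS ipX S (M phi) u = ipS ipX S phi (cnj z *\<^sub>C u)" if "phi \<in> domA \<times> domA" for phi
    using Mu domA_domA_subset_domM that XSi.scale_right[of phi u "cnj z"] by auto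
  then have uA: "u \<in> domAs \<times> domAs" and Mu_eq: "M u = cnj z *\<^sub>C u" using M_adjoint by blast+
  text \<open>Adding multiples of the eigenvector \<open>u\<close> of \<open>M\<close> (eigenvalue \<open>cnj z\<close>) keeps \<open>M\<close> dissipative.\<close>
  have "u \<in> domM"
  proof (rule domM_if_dissipative_extension[OF max uA])
    fix phi c assume phi: "phi \<in> domM"
    have phiA: "phi \<in> domAs \<times> domAs" using phi domM_subset by blast
    have dAs: "csubspace (domAs \<times> domAs)" using csubspace_Times linear_onD(1)[OF As_linear] by blast
    have "M (phi + c *\<^sub>C u) = M phi + M (c *\<^sub>C u)"
      by (rule linear_onD(3)[OF M_linear phiA csubspace_scale[OF dAs uA]])
    also have "M (c *\<^sub>C u) = (c * cnj z) *\<^sub>C u"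
      using linear_onD(4)[OF M_linear uA] Mu_eq by (simp add: scaleC_scaleC)
    finally have "M (phi + c *\<^sub>C u) = M phi + (c * cnj z) *\<^sub>C u" .
    then have "ipS ipX S (M (phi + c *\<^sub>C u)) (phi + c *\<^sub>C u)
        = ipS ipX S (M phi) phi + cnj c * (z * ipS ipX S phi u) + c * cnj z * cnj (ipS ipX S phi u)
          + c * cnj z * cnj c * complex_of_real ((XSi.nrm u)\<^sup>2)"
      using XSi.add_scale_expand[of "M phi" u phi "c * cnj z" c] Mu[OF phi] XSi.conj_sym[of phi u]
        XSi.self_eq_nrm_sq[of u] by simp
    then have "Im (ipS ipX S (M (phi + c *\<^sub>C u)) (phi + c *\<^sub>C u))
        = Im (ipS ipX S (M phi) phi) - ((Re c)\<^sup>2 + (Im c)\<^sup>2) * ((XSi.nrm u)\<^sup>2 * Im z)"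
      by (simp only: Im_dissipative_witness)
    moreover have "0 \<le> ((Re c)\<^sup>2 + (Im c)\<^sup>2) * ((XSi.nrm u)\<^sup>2 * Im z)" using z by simp
    ultimately show "Im (ipS ipX S (M (phi + c *\<^sub>C u)) (phi + c *\<^sub>C u)) \<le> 0"
      using dissipative_M[OF acc phi] by linarith
  qed
  have "cnj z * ipS ipX S u u = z * ipS ipX S u u"
    using Mu[OF \<open>u \<in> domM\<close>] XSi.scale_left[of u u "cnj z"] Mu_eq by simp
  moreover have "cnj z \<noteq> z" using z by (simp add: complex_eq_iff)
  ultimately have "ipS ipX S u u = 0" by simp
  then show "u = 0" using XSi.self_eq_0D by blast
qed

lemma m_dissipative_M:
  assumes max: "maximal_accretive_graph Hmp Hpm pair domZ Z"
  shows "m_dissipative UNIV (ipS ipX S) domM M"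
proof (rule XS.m_dissipativeI_closed[OF subset_UNIV M_linear_domM _ M_closed[OF max]])
  show "Im (ipS ipX S (M p) p) \<le> 0" if "p \<in> domM" for p
    using dissipative_M max that unfolding maximal_accretive_graph_def by blast
  show "u = 0" if "Im z > 0" "\<forall>p\<in>domM. ipS ipX S (M p - z *\<^sub>C p) u = 0" for z u
    by (rule range_M_orthogonal_eq_0[OF max that])
qed

end

theorem corollary7p4:
  fixes ipX :: "'x::cvec \<Rightarrow> 'x \<Rightarrow> complex"
    and domA :: "'x set" and A :: "'x \<Rightarrow> 'x"
    and S :: "'x \<times> 'x \<Rightarrow> 'x \<times> 'x"
    and H Hmp Hpm :: "'h::cvec set"
    and ipH ipMP ipPM pair :: "'h \<Rightarrow> 'h \<Rightarrow> complex"
    and G :: "'x \<Rightarrow> 'h" and W :: "'h \<Rightarrow> 'h"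
    and domZ :: "'h set" and Z :: "'h \<Rightarrow> 'h"
    and V :: "'h \<Rightarrow> 'h"
  assumes X: "hilbert_on (UNIV :: 'x set) ipX"
    and A: "closed_dd_symmetric ipX domA A"
    and S: "bounded_unif_pos_sa ipX S"
    and duality: "mixed_duality H ipH Hmp ipMP Hpm ipPM"
    and pairing: "is_duality_pairing H ipH Hmp ipMP Hpm ipPM pair"
    and red: "reduction_tuple ipX domA A H ipH Hmp ipMP Hpm ipPM pair G W"
    and Z: "domZ \<subseteq> Hmp" "linear_on domZ Hpm Z"
    and V: "lin_homeo H ipH Hmp ipMP V"
  shows "(m_dissipative UNIV (ipS ipX S) (dom_MGr ipX domA A G W domZ Z) (Mstar ipX domA A S)
            \<longleftrightarrow> max_accretive_Z Hmp Hpm pair domZ Z \<and> closed_op Hmp ipMP Hpm ipPM domZ Z)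
       \<and> (max_accretive_Z Hmp Hpm pair domZ Z \<and> closed_op Hmp ipMP Hpm ipPM domZ Z
            \<longleftrightarrow> m_accretive H ipH {f \<in> H. V f \<in> domZ} (\<lambda>f. Vsharp H ipH pair V (Z (V f))))"
proof -
  interpret boundary_system ipX S domA A H Hmp Hpm ipH ipMP ipPM pair domZ Z V G W
    by unfold_locales (fact X A S duality pairing red Z V)+
  have reduced: "m_accretive H ipH {f \<in> H. V f \<in> domZ} (\<lambda>f. Vsharp H ipH pair V (Z (V f)))
      \<longleftrightarrow> m_accretive H ipH domT T"
    unfolding domT_def T_def ..
  show ?thesis
    unfolding reduced
    using m_dissipative_M maximal_accretive_graph_if_m_dissipative_M
      max_accretive_if_maximal_accretive_graph closed_if_maximal_accretive_graph
      m_accretive_T maximal_accretive_graph_if_m_accretive_T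
    by blast
qed

end
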